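(* Let $k\ge 0$, let $G$ be an oriented graph and $S\subseteq V(G)$. Then $G$ can be derived, as a $k$-Burling graph, from a Burling tree whose top-set (for $G$) is $S$, if and only if there is a set $\mathcal S$ such that $(G,\mathcal S)$ is a $k$-sequential graph with base forest $H=G[S]$.
   Context: Oriented graphs are finite, without loops, multiple arcs or pairs of opposite arcs. In a rooted tree $T$ with root $r$, each non-root vertex $v$ has a parent $p(v)$; children, leaves, ancestors and descendants are as usual. A branch is a sequence $v_1\dots v_k$ ($k\ge0$) with $v_i$ the parent of $v_{i+1}$; it starts at $v_1$. A Burling tree is a 4-tuple $(T,r,\ell,c)$: $T$ a rooted tree with root $r$; $\ell$ assigns to each non-leaf vertex $v$ one of its children $\ell(v)$ (the last-born of $v$); $c$ assigns to every vertex $v$ that is neither the root nor a last-born the vertex-set of a (possibly empty) branch starting at $\ell(p(v))$, and $c(v)=\emptyset$ if $v$ is the root or a last-born. The oriented graph fully derived from it has vertex-set $V(T)$ and an arc $uv$ iff $v\in c(u)$; an oriented graph is derived from the Burling tree if it is an induced subgraph of the fully derived one. $G$ is derived from $T$ as a $k$-Burling graph if it is derived from $T$ and every branch of $T$ contains at most $k$ vertices of $G$. If $G$ is derived from $(T,r,\ell,c)$, the top-set of $G$ is the set of vertices $v$ of $G$ such that $v$ is the only vertex of $G$ on the branch of $T$ from $r$ to $v$. An in-tree is an oriented graph obtained from a rooted tree by orienting every edge towards the root; an in-forest is an oriented forest whose components are in-trees (possibly empty); in an in-forest every vertex that is not a sink has a unique out-neighbor. $k$-sequential graphs are pairs $(G,\mathcal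 S)$, $G$ an oriented graph and $\mathcal S$ a set of stable sets of $G$, defined recursively: the $0$-sequential graph is $(G,\{\emptyset\})$ with $G$ the empty graph. For $k\ge1$, $(G,\mathcal S)$ is $k$-sequential if it is obtained as follows: pick a (possibly empty) in-forest $H$ (the base forest); for every vertex $v$ of $H$ pick a $(k-1)$-sequential graph $(H_v,\mathcal R_v)$, these graphs being vertex-disjoint from each other and from $H$; $G$ consists of $H$, all the $H_v$, and, for every vertex $u$ of $H$ that is not a sink of $H$, with unique out-neighbor $v$ in $H$, all arcs from $u$ to a chosen set $R\in\mathcal R_v$; there are no other vertices or arcs. Finally $\mathcal S=\{\emptyset\}\cup\{\{v\}\cup R: v\in V(H), R\in\mathcal R_v\}$. *)

theory Defs
  imports Main
begin

record 'a ograph =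
  gV :: "'a set"
  gA :: "('a \<times> 'a) set"

definition oriented_graph :: "'a ograph \<Rightarrow> bool" where
  "oriented_graph G \<longleftrightarrow> finite (gV G) \<and> gA G \<subseteq> gV G \<times> gV G
     \<and> (\<forall>u. (u, u) \<notin> gA G) \<and> (\<forall>u v. (u, v) \<in> gA G \<longrightarrow> (v, u) \<notin> gA G)"

definition empty_graph :: "'a ograph" where
  "empty_graph = \<lparr>gV = {}, gA = {}\<rparr>"

definition induced :: "'a ograph \<Rightarrow> 'a set \<Rightarrow> 'a ograph" where
  "induced G S = \<lparr>gV = S, gA = gA G \<inter> (S \<times> S)\<rparr>"

definition map_graph :: "('a \<Rightarrow> 'b) \<Rightarrow> 'a ograph \<Rightarrow> 'b ograph" where
  "map_graph f G = \<lparr>gV = f ` gV G, gA = map_prod f f ` gA G\<rparr>"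

text \<open>In-forest: an oriented forest whose components are in-trees, i.e. an oriented
  graph in which every vertex has at most one out-neighbour and there is no directed cycle
  (equivalently: every component is a rooted tree with edges oriented towards the root).\<close>
definition in_forest :: "'a ograph \<Rightarrow> bool" where
  "in_forest H \<longleftrightarrow> oriented_graph H
     \<and> (\<forall>u v w. (u, v) \<in> gA H \<longrightarrow> (u, w) \<in> gA H \<longrightarrow> v = w)
     \<and> acyclic (gA H)"

fun kseq_base :: "nat \<Rightarrow> 'a ograph \<Rightarrow> 'a set set \<Rightarrow> 'a ograph \<Rightarrow> bool" where
  "kseq_base 0 G Ss H \<longleftrightarrow> G = empty_graph \<and> Ss = {{}} \<and> H = empty_graph"
| "kseq_base (Suc k) G Ss H \<longleftrightarrow> in_forest H \<and>
     (\<exists>(Hs :: 'a \<Rightarrow> 'a ograph) (Rs :: 'a \<Rightarrow> 'a set set) (R :: 'a \<Rightarrow> 'a set).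
        (\<forall>v\<in>gV H. \<exists>H'. kseq_base k (Hs v) (Rs v) H')
      \<and> (\<forall>v\<in>gV H. gV (Hs v) \<inter> gV H = {})
      \<and> (\<forall>v\<in>gV H. \<forall>w\<in>gV H. v \<noteq> w \<longrightarrow> gV (Hs v) \<inter> gV (Hs w) = {})
      \<and> (\<forall>u v. (u, v) \<in> gA H \<longrightarrow> R u \<in> Rs v)
      \<and> gV G = gV H \<union> (\<Union>v\<in>gV H. gV (Hs v))
      \<and> gA G = gA H \<union> (\<Union>v\<in>gV H. gA (Hs v))
               \<union> {(u, x). \<exists>v. (u, v) \<in> gA H \<and> x \<in> R u}
      \<and> Ss = {{}} \<union> {insert v X | v X. v \<in> gV H \<and> X \<in> Rs v})"

record 'b btree =
  tV :: "'b set"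
  troot :: 'b
  tpar :: "'b \<Rightarrow> 'b"     \<comment> \<open>parent (meaningful on non-root vertices)\<close>
  tlast :: "'b \<Rightarrow> 'b"    \<comment> \<open>last-born child (meaningful on non-leaves)\<close>
  tc :: "'b \<Rightarrow> 'b set"

definition rooted_tree :: "'b btree \<Rightarrow> bool" where
  "rooted_tree T \<longleftrightarrow> finite (tV T) \<and> troot T \<in> tV T
     \<and> (\<forall>v\<in>tV T - {troot T}. tpar T v \<in> tV T)
     \<and> (\<forall>v\<in>tV T. \<exists>n. (tpar T ^^ n) v = troot T)"

definition children :: "'b btree \<Rightarrow> 'b \<Rightarrow> 'b set" where
  "children T v = {w \<in> tV T - {troot T}. tpar T w = v}"

definition is_leaf :: "'b btree \<Rightarrow> 'b \<Rightarrow> bool" where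
  "is_leaf T v \<longleftrightarrow> children T v = {}"

definition is_branch :: "'b btree \<Rightarrow> 'b list \<Rightarrow> bool" where
  "is_branch T xs \<longleftrightarrow> set xs \<subseteq> tV T
     \<and> successively (\<lambda>a b. b \<in> children T a) xs"

definition is_last_born :: "'b btree \<Rightarrow> 'b \<Rightarrow> bool" where
  "is_last_born T v \<longleftrightarrow> v \<noteq> troot T \<and> v = tlast T (tpar T v)"

definition burling_tree :: "'b btree \<Rightarrow> bool" where
  "burling_tree T \<longleftrightarrow> rooted_tree T
     \<and> (\<forall>v\<in>tV T. \<not> is_leaf T v \<longrightarrow> tlast T v \<in> children T v)
     \<and> (\<forall>v\<in>tV T. (v = troot T \<or> is_last_born T v) \<longrightarrow> tc T v = {})
     \<and> (\<forall>v\<in>tV T. v \<noteq> troot T \<and> \<not> is_last_born T v \<longrightarrow>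
          (\<exists>xs. is_branch T xs \<and> (xs = [] \<or> hd xs = tlast T (tpar T v)) \<and> tc T v = set xs))"

definition fully_derived :: "'b btree \<Rightarrow> 'b ograph" where
  "fully_derived T = \<lparr>gV = tV T, gA = {(u, v). u \<in> tV T \<and> v \<in> tV T \<and> v \<in> tc T u}\<rparr>"

definition derived :: "'b btree \<Rightarrow> 'b ograph \<Rightarrow> bool" where
  "derived T G \<longleftrightarrow> gV G \<subseteq> tV T \<and> G = induced (fully_derived T) (gV G)"

definition k_burling_derived :: "nat \<Rightarrow> 'b btree \<Rightarrow> 'b ograph \<Rightarrow> bool" where
  "k_burling_derived k T G \<longleftrightarrow> derived T G
     \<and> (\<forall>xs. is_branch T xs \<longrightarrow> card (set xs \<inter> gV G) \<le> k)"

definition top_set :: "'b btree \<Rightarrow> 'b ograph \<Rightarrow> 'b set" where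
  "top_set T G = {v \<in> gV G. \<forall>xs. is_branch T xs \<and> xs \<noteq> [] \<and> hd xs = troot T \<and> last xs = v
                     \<longrightarrow> set xs \<inter> gV G = {v}}"

end

theory Submission
  imports Defs "HOL-Library.Nat_Bijection"
begin

text \<open>Forward direction. An arc from \<open>u\<close> in a Burling tree ends on the branch \<open>c(u)\<close>, which starts
  at a sibling of \<open>u\<close>; so the proper ancestors of \<open>u\<close> are proper ancestors of each out-neighbour,
  and the proper ancestors of an out-neighbour lie above \<open>u\<close> or on \<open>c(u)\<close>. Consequently the top
  vertices span an in-forest \<open>H\<close> (two top out-neighbours on \<open>c(u)\<close> would be comparable), every
  other vertex of \<open>G\<close> lies below a unique top vertex \<open>s\<close>, arcs leaving the part below \<open>s\<close> stay
  in it, and a top vertex \<open>u\<close> sends arcs only to its out-neighbour \<open>v\<close> in \<open>H\<close> and to the vertices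
  of \<open>G\<close> on \<open>c(u)\<close> after \<open>v\<close>, which lie below \<open>v\<close>. The subtree at \<open>s\<close> is a Burling tree carrying
  the part below \<open>s\<close> with one vertex of \<open>G\<close> fewer on each branch, so induction on \<open>k\<close> applies.
  The induction also records that the vertices of \<open>G\<close> on a branch from the root form a member of
  the family, which makes the set of lower out-neighbours of \<open>u\<close> a member of the family of \<open>v\<close>.

  Backward direction. Build Burling trees for the pieces by induction, realising every member of
  a family as the vertices of \<open>G\<close> on a branch from the root. Hang these trees below their top
  vertices, put each top vertex \<open>u\<close> on a spine at the level given by its height in \<open>H\<close>, and let
  \<open>c(u)\<close> run from the spine through the out-neighbour \<open>v\<close> into the branch of the tree of \<open>v\<close>
  realising the set of lower out-neighbours of \<open>u\<close>.\<close>

section \<open>Depth and ancestors in a rooted tree\<close>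

definition depth :: "'b btree \<Rightarrow> 'b \<Rightarrow> nat" where
  "depth T x = (LEAST n. (tpar T ^^ n) x = troot T)"

definition proper_ancestors :: "'b btree \<Rightarrow> 'b \<Rightarrow> 'b set" where
  "proper_ancestors T x = {(tpar T ^^ n) x | n. 1 \<le> n \<and> n \<le> depth T x}"

definition root_path :: "'b btree \<Rightarrow> 'b \<Rightarrow> 'b list" where
  "root_path T x = map (\<lambda>i. (tpar T ^^ (depth T x - i)) x) [0..<Suc (depth T x)]"

definition root_branch :: "'b btree \<Rightarrow> 'b list \<Rightarrow> bool" where
  "root_branch T xs \<longleftrightarrow> is_branch T xs \<and> (xs = [] \<or> hd xs = troot T)"

lemma successively_children_closed:
  assumes "successively (\<lambda>a b. b \<in> children T a) xs" "xs \<noteq> []" "hd xs \<in> A"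
    and "\<And>a b. a \<in> A \<Longrightarrow> b \<in> children T a \<Longrightarrow> b \<in> A"
  shows "set xs \<subseteq> A"
  using assms
proof (induction xs)
  case (Cons x xs)
  then show ?case
    by (cases xs) (auto simp: successively_Cons)
qed simp

lemma is_branch_drop: "is_branch T xs \<Longrightarrow> is_branch T (drop i xs)"
  unfolding is_branch_def
  by (metis append_take_drop_id set_drop_subset successively_append_iff order_trans)

lemma nth_in_set_drop: "i \<le> j \<Longrightarrow> j < length xs \<Longrightarrow> xs ! j \<in> set (drop i xs)"
  using nth_mem[of "j - i" "drop i xs"] by simp

locale rooted_btree =
  fixes T :: "'b btree"
  assumes rooted: "rooted_tree T"
begin

lemma finite_vertices: "finite (tV T)"
  using rooted by (simp add: rooted_tree_def)

lemma tpar_in: "x \<in> tV T \<Longrightarrow> x \<noteq> troot T \<Longrightarrow> tpar T x \<in> tV T"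
  using rooted by (simp add: rooted_tree_def)

lemma tpar_pow_depth: "x \<in> tV T \<Longrightarrow> (tpar T ^^ depth T x) x = troot T"
  unfolding depth_def using rooted by (auto simp: rooted_tree_def intro: LeastI_ex)

lemma depth_le: "(tpar T ^^ n) x = troot T \<Longrightarrow> depth T x \<le> n"
  unfolding depth_def by (rule Least_le)

lemma depth_root [simp]: "depth T (troot T) = 0"
  using depth_le[of 0 "troot T"] by simp

lemma depth_eq_0_iff: "x \<in> tV T \<Longrightarrow> depth T x = 0 \<longleftrightarrow> x = troot T"
  using tpar_pow_depth[of x] depth_le[of 0 x] by auto

lemma depth_tpar:
  assumes "x \<in> tV T" "x \<noteq> troot T"
  shows "depth T x = Suc (depth T (tpar T x))"
proof -
  have p: "tpar T x \<in> tV T" using tpar_in assms by simp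
  obtain m where m: "depth T x = Suc m"
    using depth_eq_0_iff assms by (cases "depth T x") auto
  have "(tpar T ^^ m) (tpar T x) = troot T"
    using tpar_pow_depth[OF assms(1)] m by (simp add: funpow_Suc_right del: funpow.simps)
  hence "depth T (tpar T x) \<le> m" by (rule depth_le)
  moreover have "(tpar T ^^ Suc (depth T (tpar T x))) x = troot T"
    using tpar_pow_depth[OF p] by (simp add: funpow_Suc_right del: funpow.simps)
  hence "depth T x \<le> Suc (depth T (tpar T x))" by (rule depth_le)
  ultimately show ?thesis using m by simp
qed

lemma tpar_pow_in:
  assumes "x \<in> tV T" "n \<le> depth T x"
  shows "(tpar T ^^ n) x \<in> tV T \<and> depth T ((tpar T ^^ n) x) = depth T x - n"
  using assms(2)
proof (induction n)
  case (Suc n)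
  then have IH: "(tpar T ^^ n) x \<in> tV T" "depth T ((tpar T ^^ n) x) = depth T x - n" by auto
  have "(tpar T ^^ n) x \<noteq> troot T" using IH Suc.prems by auto
  then show ?case using tpar_in[OF IH(1)] depth_tpar[OF IH(1)] IH Suc.prems by simp
qed (use assms in simp)

lemma childrenD:
  "b \<in> children T a \<Longrightarrow>
    b \<in> tV T \<and> b \<noteq> troot T \<and> tpar T b = a \<and> a \<in> tV T \<and> depth T b = Suc (depth T a)"
  unfolding children_def using tpar_in depth_tpar by auto

lemma in_children_tpar: "x \<in> tV T \<Longrightarrow> x \<noteq> troot T \<Longrightarrow> x \<in> children T (tpar T x)"
  by (simp add: children_def)

lemma branch_subset: "is_branch T xs \<Longrightarrow> set xs \<subseteq> tV T"
  by (simp add: is_branch_def)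

lemma branch_nth_ancestor:
  assumes "is_branch T xs" "i \<le> j" "j < length xs"
  shows "(tpar T ^^ (j - i)) (xs ! j) = xs ! i \<and> depth T (xs ! j) = depth T (xs ! i) + (j - i)"
  using assms(2,3)
proof (induction j)
  case (Suc j)
  show ?case
  proof (cases "i = Suc j")
    case False
    hence ij: "i \<le> j" using Suc.prems by simp
    have c: "xs ! Suc j \<in> children T (xs ! j)"
      using assms(1) Suc.prems by (auto simp: is_branch_def intro: successively_nth)
    have "Suc j - i = Suc (j - i)" using ij by simp
    then show ?thesis using Suc ij childrenD[OF c] by (simp add: funpow_Suc_right del: funpow.simps)
  qed simp
qed simp

lemma length_root_path [simp]: "length (root_path T x) = Suc (depth T x)"
  by (simp add: root_path_def)

lemma root_path_nonempty: "root_path T x \<noteq> []"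
  using length_root_path by (metis list.size(3) nat.distinct(1))

lemma nth_root_path: "i \<le> depth T x \<Longrightarrow> root_path T x ! i = (tpar T ^^ (depth T x - i)) x"
  by (simp add: root_path_def nth_map del: upt_Suc)

lemma hd_root_path: "x \<in> tV T \<Longrightarrow> hd (root_path T x) = troot T"
  using root_path_nonempty nth_root_path[of 0 x] tpar_pow_depth by (simp add: hd_conv_nth)

lemma last_root_path: "last (root_path T x) = x"
  by (simp add: root_path_def)

lemma set_root_path: "set (root_path T x) = {(tpar T ^^ n) x | n. n \<le> depth T x}"
proof
  show "set (root_path T x) \<subseteq> {(tpar T ^^ n) x | n. n \<le> depth T x}"
    by (auto simp: root_path_def simp del: upt_Suc)
  show "{(tpar T ^^ n) x | n. n \<le> depth T x} \<subseteq> set (root_path T x)"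
  proof clarify
    fix n assume "n \<le> depth T x"
    hence "root_path T x ! (depth T x - n) = (tpar T ^^ n) x" by (simp add: nth_root_path)
    thus "(tpar T ^^ n) x \<in> set (root_path T x)"
      by (metis length_root_path diff_le_self le_imp_less_Suc nth_mem)
  qed
qed

lemma root_path_branch:
  assumes "x \<in> tV T"
  shows "is_branch T (root_path T x)"
proof -
  have "set (root_path T x) \<subseteq> tV T" using tpar_pow_in[OF assms] by (auto simp: set_root_path)
  moreover have "successively (\<lambda>a b. b \<in> children T a) (root_path T x)"
    unfolding successively_conv_nth
  proof (intro allI impI)
    fix i assume i: "Suc i < length (root_path T x)"
    let ?b = "(tpar T ^^ (depth T x - Suc i)) x"
    have b: "?b \<in> tV T" "depth T ?b = Suc i"
      using tpar_pow_in[OF assms, of "depth T x - Suc i"] i by auto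
    have "?b \<noteq> troot T" using b depth_eq_0_iff by auto
    moreover have "depth T x - i = Suc (depth T x - Suc i)" using i by simp
    ultimately show "root_path T x ! Suc i \<in> children T (root_path T x ! i)"
      using i b by (simp add: nth_root_path children_def)
  qed
  ultimately show ?thesis by (simp add: is_branch_def)
qed

lemma root_branch_root_path: "x \<in> tV T \<Longrightarrow> root_branch T (root_path T x)"
  using root_path_branch hd_root_path by (simp add: root_branch_def)

lemma root_branch_eq_root_path:
  assumes "root_branch T xs" "xs \<noteq> []"
  shows "xs = root_path T (last xs)"
proof -
  let ?j = "length xs - 1"
  have b: "is_branch T xs" and h: "xs ! 0 = troot T"
    using assms by (simp_all add: root_branch_def hd_conv_nth)
  have dl: "depth T (last xs) = ?j"
    using branch_nth_ancestor[OF b, of 0 ?j] h assms(2) by (simp add: last_conv_nth)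
  show ?thesis
  proof (rule nth_equalityI)
    show "length xs = length (root_path T (last xs))" using dl assms by simp
    fix i assume "i < length xs"
    then show "xs ! i = root_path T (last xs) ! i"
      using branch_nth_ancestor[OF b, of i ?j] dl assms(2)
        by (simp add: nth_root_path last_conv_nth)
  qed
qed

lemma proper_ancestorsI: "1 \<le> n \<Longrightarrow> n \<le> depth T x \<Longrightarrow> (tpar T ^^ n) x \<in> proper_ancestors T x"
  unfolding proper_ancestors_def by auto

lemma proper_ancestorsD:
  assumes "x \<in> tV T" "w \<in> proper_ancestors T x"
  shows "w \<in> tV T \<and> depth T w < depth T x \<and> w = (tpar T ^^ (depth T x - depth T w)) x"
proof -
  obtain n where "1 \<le> n" "n \<le> depth T x" "w = (tpar T ^^ n) x"
    using assms by (auto simp: proper_ancestors_def)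
  thus ?thesis using tpar_pow_in[OF assms(1)] by auto
qed

lemma proper_ancestors_root [simp]: "proper_ancestors T (troot T) = {}"
  by (simp add: proper_ancestors_def depth_def)

lemma not_in_proper_ancestors: "x \<in> tV T \<Longrightarrow> x \<notin> proper_ancestors T x"
  using proper_ancestorsD by blast

lemma set_root_path_eq: "set (root_path T x) = insert x (proper_ancestors T x)"
proof
  show "set (root_path T x) \<subseteq> insert x (proper_ancestors T x)"
  proof
    fix y assume "y \<in> set (root_path T x)"
    then obtain n where n: "n \<le> depth T x" "y = (tpar T ^^ n) x" by (auto simp: set_root_path)
    then show "y \<in> insert x (proper_ancestors T x)"
      using proper_ancestorsI[of n x] by (cases n) auto
  qed
  show "insert x (proper_ancestors T x) \<subseteq> set (root_path T x)"
    unfolding set_root_path proper_ancestors_def by (auto, metis funpow_0 le0)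
qed

lemma proper_ancestors_child:
  assumes "b \<in> children T a"
  shows "proper_ancestors T b = insert a (proper_ancestors T a)"
proof
  have c: "tpar T b = a" "depth T b = Suc (depth T a)" using childrenD[OF assms] by auto
  show "proper_ancestors T b \<subseteq> insert a (proper_ancestors T a)"
  proof
    fix w assume "w \<in> proper_ancestors T b"
    then obtain n where n: "1 \<le> n" "n \<le> depth T b" "w = (tpar T ^^ n) b"
      by (auto simp: proper_ancestors_def)
    then obtain m where m: "n = Suc m" by (cases n) auto
    have w: "w = (tpar T ^^ m) a" using n m c by (simp add: funpow_Suc_right del: funpow.simps)
    show "w \<in> insert a (proper_ancestors T a)"
      using m n w c proper_ancestorsI[of m a] by (cases m) auto
  qed
  show "insert a (proper_ancestors T a) \<subseteq> proper_ancestors T b"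
  proof
    fix w assume "w \<in> insert a (proper_ancestors T a)"
    then obtain m where m: "m \<le> depth T a" "w = (tpar T ^^ m) a"
      by (auto simp: proper_ancestors_def) (metis funpow_0 le0)
    have "w = (tpar T ^^ Suc m) b" using m c by (simp add: funpow_Suc_right del: funpow.simps)
    thus "w \<in> proper_ancestors T b" using m c proper_ancestorsI[of "Suc m" b] by simp
  qed
qed

lemma proper_ancestors_trans:
  assumes "x \<in> tV T" "w \<in> proper_ancestors T x" "u \<in> proper_ancestors T w"
  shows "u \<in> proper_ancestors T x"
proof -
  obtain n where n: "1 \<le> n" "n \<le> depth T x" "w = (tpar T ^^ n) x"
    using assms by (auto simp: proper_ancestors_def)
  have w: "depth T w = depth T x - n" using tpar_pow_in[OF assms(1) n(2)] n by auto
  obtain m where m: "1 \<le> m" "m \<le> depth T w" "u = (tpar T ^^ m) w"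
    using assms by (auto simp: proper_ancestors_def)
  have "u = (tpar T ^^ (m + n)) x" using m n by (simp add: funpow_add)
  thus ?thesis using m n w by (auto intro!: proper_ancestorsI)
qed

lemma proper_ancestors_depth_less:
  assumes "x \<in> tV T" "a \<in> proper_ancestors T x" "b \<in> proper_ancestors T x" "depth T a < depth T b"
  shows "a \<in> proper_ancestors T b"
proof -
  have a: "depth T a < depth T x" "a = (tpar T ^^ (depth T x - depth T a)) x"
    using proper_ancestorsD assms by auto
  have b: "depth T b < depth T x" "b = (tpar T ^^ (depth T x - depth T b)) x"
    using proper_ancestorsD assms by auto
  have "(tpar T ^^ (depth T b - depth T a)) b
      = (tpar T ^^ ((depth T b - depth T a) + (depth T x - depth T b))) x"
    using b(2) by (simp add: funpow_add)
  also have "(depth T b - depth T a) + (depth T x - depth T b) = depth T x - depth T a"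
    using a b assms by simp
  finally have "(tpar T ^^ (depth T b - depth T a)) b = a" using a(2) by simp
  thus ?thesis using proper_ancestorsI[of "depth T b - depth T a" b] assms by simp
qed

lemma ancestors_eq_if_depth_eq:
  assumes "x \<in> tV T" "a \<in> insert x (proper_ancestors T x)" "b \<in> insert x (proper_ancestors T x)"
    and "depth T a = depth T b"
  shows "a = b"
  using assms proper_ancestorsD by (metis insert_iff less_irrefl)

lemma branch_nth_proper_ancestor:
  assumes "is_branch T xs" "i < j" "j < length xs"
  shows "xs ! i \<in> proper_ancestors T (xs ! j)"
  using branch_nth_ancestor[OF assms(1), of i j] proper_ancestorsI[of "j - i" "xs ! j"] assms
    by simp

lemma proper_ancestors_branch_nth:
  assumes "is_branch T xs" "j < length xs" "y \<in> proper_ancestors T (xs ! j)"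
  shows "y \<in> proper_ancestors T (hd xs) \<or> (\<exists>i<j. y = xs ! i)"
proof (cases "j = 0")
  case True
  then show ?thesis using assms by (simp add: hd_conv_nth)
next
  case False
  have xj: "xs ! j \<in> tV T" using branch_subset[OF assms(1)] assms(2) by auto
  have dj: "depth T (xs ! j) = depth T (xs ! 0) + j"
    using branch_nth_ancestor[OF assms(1), of 0 j] assms by auto
  have h0: "xs ! 0 \<in> proper_ancestors T (xs ! j)"
    using branch_nth_proper_ancestor[OF assms(1), of 0 j] False assms by simp
  consider "depth T y < depth T (xs ! 0)" | "depth T (xs ! 0) \<le> depth T y" by linarith
  then show ?thesis
  proof cases
    case 1
    have "hd xs = xs ! 0" using assms(2) by (cases xs) auto
    then show ?thesis using proper_ancestors_depth_less[OF xj assms(3) h0] 1 by simp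
  next
    case 2
    let ?i = "depth T y - depth T (xs ! 0)"
    have "depth T y < depth T (xs ! j)" using proper_ancestorsD[OF xj assms(3)] by blast
    hence i: "?i < j" using 2 dj by linarith
    have "depth T (xs ! ?i) = depth T (xs ! 0) + ?i"
      using branch_nth_ancestor[OF assms(1), of 0 ?i] i assms by auto
    moreover have "xs ! ?i \<in> insert (xs ! j) (proper_ancestors T (xs ! j))"
      using branch_nth_proper_ancestor[OF assms(1) i assms(2)] by simp
    ultimately have "y = xs ! ?i"
      using ancestors_eq_if_depth_eq[OF xj, of y "xs ! ?i"] assms(3) 2 by simp
    thus ?thesis using i by blast
  qed
qed

lemma top_set_eq:
  assumes "gV G \<subseteq> tV T"
  shows "top_set T G = {v \<in> gV G. proper_ancestors T v \<inter> gV G = {}}"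
proof -
  have "(\<forall>xs. is_branch T xs \<and> xs \<noteq> [] \<and> hd xs = troot T \<and> last xs = v \<longrightarrow> set xs \<inter> gV G = {v})
      \<longleftrightarrow> proper_ancestors T v \<inter> gV G = {}" if v: "v \<in> gV G" for v
  proof -
    have vT: "v \<in> tV T" using v assms by auto
    have "(\<forall>xs. is_branch T xs \<and> xs \<noteq> [] \<and> hd xs = troot T \<and> last xs = v \<longrightarrow> set xs \<inter> gV G = {v})
        \<longleftrightarrow> set (root_path T v) \<inter> gV G = {v}"
      using root_branch_root_path[OF vT] root_branch_eq_root_path root_path_nonempty last_root_path
      unfolding root_branch_def by metis
    also have "\<dots> \<longleftrightarrow> proper_ancestors T v \<inter> gV G = {}"
      using set_root_path_eq[of v] not_in_proper_ancestors[OF vT] v by auto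
    finally show ?thesis .
  qed
  then show ?thesis unfolding top_set_def by blast
qed

text \<open>In the subtree at \<open>w\<close> the vertex \<open>w\<close> is the root, where \<open>c\<close> has to be empty.\<close>

definition subtree :: "'b \<Rightarrow> 'b btree" where
  "subtree w = \<lparr>tV = insert w {y \<in> tV T. w \<in> proper_ancestors T y}, troot = w, tpar = tpar T,
      tlast = tlast T, tc = (tc T)(w := {})\<rparr>"

lemma subtree_simps [simp]:
  "tV (subtree w) = insert w {y \<in> tV T. w \<in> proper_ancestors T y}" "troot (subtree w) = w"
  "tpar (subtree w) = tpar T" "tlast (subtree w) = tlast T" "tc (subtree w) = (tc T)(w := {})"
  by (simp_all add: subtree_def)

lemma subtree_vertices_subset: "w \<in> tV T \<Longrightarrow> tV (subtree w) \<subseteq> tV T"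
  by auto

lemma children_subtree:
  assumes "w \<in> tV T" "a \<in> tV (subtree w)"
  shows "children (subtree w) a = children T a"
proof
  show "children (subtree w) a \<subseteq> children T a"
    using proper_ancestorsD by (fastforce simp: children_def)
  show "children T a \<subseteq> children (subtree w) a"
  proof
    fix b assume b: "b \<in> children T a"
    have "w \<in> proper_ancestors T b" using proper_ancestors_child[OF b] assms by auto
    moreover have "b \<noteq> w" using calculation not_in_proper_ancestors childrenD[OF b] by auto
    ultimately show "b \<in> children (subtree w) a" using b childrenD[OF b] by (simp add: children_def)
  qed
qed

lemma branch_subtree_imp_branch:
  assumes "w \<in> tV T" "is_branch (subtree w) xs"
  shows "is_branch T xs"
proof -
  have s: "set xs \<subseteq> tV (subtree w)" using assms by (simp add: is_branch_def)
  have "successively (\<lambda>a b. b \<in> children T a) xs"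
    using assms(2) unfolding is_branch_def
    by (elim conjE successively_mono) (use s children_subtree[OF assms(1)] in auto)
  thus ?thesis using s subtree_vertices_subset[OF assms(1)] by (auto simp: is_branch_def)
qed

lemma branch_imp_branch_subtree:
  assumes "w \<in> tV T" "is_branch T xs" "xs = [] \<or> hd xs \<in> tV (subtree w)"
  shows "is_branch (subtree w) xs"
proof (cases "xs = []")
  case False
  have s: "set xs \<subseteq> tV (subtree w)"
    by (rule successively_children_closed[of T xs])
      (use assms False children_subtree[OF assms(1)] in \<open>auto simp: is_branch_def children_def\<close>)
  have "successively (\<lambda>a b. b \<in> children (subtree w) a) xs"
    using assms(2) unfolding is_branch_def
    by (elim conjE successively_mono) (use s children_subtree[OF assms(1)] in auto)
  thus ?thesis using s by (auto simp: is_branch_def)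
qed (simp add: is_branch_def)

lemma rooted_subtree:
  assumes "w \<in> tV T"
  shows "rooted_tree (subtree w)"
  unfolding rooted_tree_def
proof (intro conjI ballI)
  show "finite (tV (subtree w))" using finite_vertices by simp
  show "troot (subtree w) \<in> tV (subtree w)" by simp
next
  fix y assume "y \<in> tV (subtree w) - {troot (subtree w)}"
  hence y: "y \<in> tV T" "w \<in> proper_ancestors T y" by auto
  have "y \<noteq> troot T" using y by auto
  then show "tpar (subtree w) y \<in> tV (subtree w)"
    using proper_ancestors_child[OF in_children_tpar[OF y(1)]] y tpar_in[OF y(1)] by auto
next
  fix y assume "y \<in> tV (subtree w)"
  then show "\<exists>n. (tpar (subtree w) ^^ n) y = troot (subtree w)"
    by (auto simp: proper_ancestors_def intro: exI[of _ 0])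
qed

lemma root_branch_subtree_drop:
  assumes "is_branch T xs" "i < length xs" "xs ! i = w"
  shows "root_branch (subtree w) (drop i xs)"
proof -
  have "w \<in> tV T" using assms branch_subset by (metis nth_mem subsetD)
  moreover have "hd (drop i xs) = w" using assms by (simp add: hd_drop_conv_nth)
  ultimately show ?thesis
    using branch_imp_branch_subtree is_branch_drop[OF assms(1)] by (simp add: root_branch_def)
qed

lemma branch_subtree_extend:
  assumes "w \<in> tV T" "is_branch (subtree w) ys" "ys \<noteq> []"
  shows "\<exists>zs. is_branch T zs \<and> set ys \<subseteq> set zs \<and> w \<in> set zs"
proof -
  obtain y0 ys' where ys: "ys = y0 # ys'" using assms(3) by (cases ys) auto
  have yT: "is_branch T ys" using branch_subtree_imp_branch[OF assms(1,2)] .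
  have y0: "y0 \<in> tV (subtree w)" using assms(2) ys by (simp add: is_branch_def)
  then have y0T: "y0 \<in> tV T" using subtree_vertices_subset[OF assms(1)] by auto
  define zs where "zs = root_path T y0 @ ys'"
  have "is_branch T zs"
  proof -
    have "ys' = [] \<or> hd ys' \<in> children T y0"
      using yT ys by (auto simp: is_branch_def successively_Cons)
    moreover have "is_branch T ys'" using is_branch_drop[OF yT, of 1] ys by simp
    ultimately show ?thesis using root_path_branch[OF y0T] root_path_nonempty
      unfolding zs_def is_branch_def by (simp add: successively_append_iff last_root_path)
  qed
  moreover have "set ys \<subseteq> set zs" using set_root_path_eq[of y0] by (auto simp: zs_def ys)
  moreover have "w \<in> set zs" using y0 set_root_path_eq[of y0] by (auto simp: zs_def)
  ultimately show ?thesis by blast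
qed

end

section \<open>Burling trees\<close>

lemma map_prod_image_eq_iff:
  assumes "inj f"
  shows "map_prod f f ` A = {(u, v). u \<in> f ` V \<and> v \<in> f ` V \<and> P u v}
    \<longleftrightarrow> A \<subseteq> V \<times> V \<and> (\<forall>a\<in>V. \<forall>b\<in>V. (a, b) \<in> A \<longleftrightarrow> P (f a) (f b))"
proof -
  have "inj (map_prod f f)" using map_prod_inj_on[OF assms assms] by simp
  moreover have "{(u, v). u \<in> f ` V \<and> v \<in> f ` V \<and> P u v}
      = map_prod f f ` {(a, b). a \<in> V \<and> b \<in> V \<and> P (f a) (f b)}"
    by auto
  ultimately have "map_prod f f ` A = {(u, v). u \<in> f ` V \<and> v \<in> f ` V \<and> P u v}
      \<longleftrightarrow> A = {(a, b). a \<in> V \<and> b \<in> V \<and> P (f a) (f b)}"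
    by (simp add: inj_image_eq_iff)
  then show ?thesis by auto
qed

lemma derived_Inl_iff:
  "derived T (map_graph Inl G) \<longleftrightarrow> Inl ` gV G \<subseteq> tV T \<and> gA G \<subseteq> gV G \<times> gV G
     \<and> (\<forall>a\<in>gV G. \<forall>b\<in>gV G. (a, b) \<in> gA G \<longleftrightarrow> Inl b \<in> tc T (Inl a))"
proof -
  have "gA (fully_derived T) \<inter> X \<times> X = {(u, v). u \<in> X \<and> v \<in> X \<and> (u \<in> tV T \<and> v \<in> tV T \<and> v \<in> tc T u)}"
    for X
    by (auto simp: fully_derived_def)
  then have "derived T (map_graph Inl G) \<longleftrightarrow> Inl ` gV G \<subseteq> tV T
      \<and> map_prod Inl Inl ` gA G = {(u, v). u \<in> Inl ` gV G \<and> v \<in> Inl ` gV G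
                                      \<and> (u \<in> tV T \<and> v \<in> tV T \<and> v \<in> tc T u)}"
    by (simp add: derived_def map_graph_def induced_def)
  then show ?thesis by (auto simp: map_prod_image_eq_iff image_subset_iff)
qed

locale burling_btree = rooted_btree +
  assumes burling: "burling_tree T"
begin

lemma tlast_in_children: "x \<in> tV T \<Longrightarrow> \<not> is_leaf T x \<Longrightarrow> tlast T x \<in> children T x"
  using burling by (simp add: burling_tree_def)

lemma tc_root_or_last_born: "x \<in> tV T \<Longrightarrow> x = troot T \<or> is_last_born T x \<Longrightarrow> tc T x = {}"
  using burling unfolding burling_tree_def by blast

lemma tc_eq_branch:
  "x \<in> tV T \<Longrightarrow> x \<noteq> troot T \<Longrightarrow> \<not> is_last_born T x \<Longrightarrow>
   \<exists>xs. is_branch T xs \<and> (xs = [] \<or> hd xs = tlast T (tpar T x)) \<and> tc T x = set xs"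
  using burling by (simp add: burling_tree_def)

lemma tc_nonempty:
  assumes "x \<in> tV T" "tc T x \<noteq> {}"
  shows "x \<noteq> troot T \<and> \<not> is_last_born T x \<and> tlast T (tpar T x) \<in> children T (tpar T x)
     \<and> (\<exists>xs. is_branch T xs \<and> xs \<noteq> [] \<and> hd xs = tlast T (tpar T x) \<and> tc T x = set xs)"
proof -
  have x: "x \<noteq> troot T" "\<not> is_last_born T x" using tc_root_or_last_born assms by auto
  have "x \<in> children T (tpar T x)" using in_children_tpar assms x by simp
  then have "tlast T (tpar T x) \<in> children T (tpar T x)"
    using tlast_in_children[of "tpar T x"] tpar_in[OF assms(1) x(1)] by (auto simp: is_leaf_def)
  moreover obtain xs where "is_branch T xs" "xs = [] \<or> hd xs = tlast T (tpar T x)" "tc T x = set xs"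
    using tc_eq_branch assms x by blast
  ultimately show ?thesis using x assms by auto
qed

lemma tc_subset: "x \<in> tV T \<Longrightarrow> tc T x \<subseteq> tV T"
  using tc_nonempty branch_subset by (metis empty_subsetI)

text \<open>The branch \<open>c(x)\<close> starts at the last-born sibling of \<open>x\<close> and then descends, so every arc
  of the fully derived graph strictly increases the following rank.\<close>

definition arc_rank where
  "arc_rank x = 2 * depth T x + (if is_last_born T x then 1 else 0)"

lemma arc_rank_less:
  assumes "x \<in> tV T" "y \<in> tc T x"
  shows "arc_rank x < arc_rank y"
proof -
  have "tc T x \<noteq> {}" using assms(2) by blast
  from tc_nonempty[OF assms(1) this] obtain xs where xs: "is_branch T xs" "xs \<noteq> []"
      "hd xs = tlast T (tpar T x)" "tc T x = set xs"
    and x: "x \<noteq> troot T" "\<not> is_last_born T x"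
    and last: "tlast T (tpar T x) \<in> children T (tpar T x)"
    by blast
  have xc: "x \<in> children T (tpar T x)" using in_children_tpar assms x by simp
  have "depth T (tlast T (tpar T x)) = depth T x"
    using childrenD[OF last] childrenD[OF xc] by simp
  then have d0: "depth T (xs ! 0) = depth T x" using xs(2,3) by (simp add: hd_conv_nth)
  obtain j where j: "j < length xs" "y = xs ! j" using assms(2) xs(4) by (metis in_set_conv_nth)
  have dy: "depth T y = depth T x + j" using branch_nth_ancestor[OF xs(1), of 0 j] j d0 by simp
  show ?thesis
  proof (cases j)
    case 0
    then have "y = tlast T (tpar T x)" using j xs(2,3) by (simp add: hd_conv_nth)
    then have "is_last_born T y" using childrenD[OF last] by (simp add: is_last_born_def)
    then show ?thesis using x dy 0 by (simp add: arc_rank_def)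
  qed (use x dy in \<open>simp add: arc_rank_def\<close>)
qed

lemma tc_eq_branch_proper_ancestors:
  assumes "x \<in> tV T" "tc T x \<noteq> {}"
  shows "\<exists>xs. is_branch T xs \<and> xs \<noteq> [] \<and> tc T x = set xs
      \<and> proper_ancestors T (hd xs) = proper_ancestors T x"
proof -
  from tc_nonempty[OF assms] obtain xs where xs: "is_branch T xs" "xs \<noteq> []"
      "hd xs = tlast T (tpar T x)" "tc T x = set xs"
    and x: "x \<noteq> troot T" and last: "tlast T (tpar T x) \<in> children T (tpar T x)"
    by blast
  have "x \<in> children T (tpar T x)" using in_children_tpar assms x by simp
  then have "proper_ancestors T (hd xs) = proper_ancestors T x"
    using xs(3) proper_ancestors_child[OF last] proper_ancestors_child by simp
  then show ?thesis using xs by blast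
qed

lemma proper_ancestors_subset_tc:
  assumes "x \<in> tV T" "y \<in> tc T x"
  shows "proper_ancestors T x \<subseteq> proper_ancestors T y"
proof -
  obtain xs where xs: "is_branch T xs" "xs \<noteq> []" "tc T x = set xs"
      "proper_ancestors T (hd xs) = proper_ancestors T x"
    using tc_eq_branch_proper_ancestors assms by blast
  obtain j where j: "j < length xs" "y = xs ! j" using assms(2) xs(3) by (metis in_set_conv_nth)
  have h: "hd xs = xs ! 0" using xs(2) by (simp add: hd_conv_nth)
  show ?thesis
  proof (cases j)
    case (Suc i)
    have "xs ! 0 \<in> proper_ancestors T y" using branch_nth_proper_ancestor[OF xs(1)] j Suc by simp
    moreover have "y \<in> tV T" using tc_subset assms by blast
    ultimately show ?thesis using proper_ancestors_trans[of y "xs ! 0"] xs(4) h by auto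
  qed (use j xs(4) h in simp)
qed

lemma proper_ancestors_tc_subset:
  assumes "x \<in> tV T" "y \<in> tc T x"
  shows "proper_ancestors T y \<subseteq> proper_ancestors T x \<union> tc T x"
proof
  fix z assume z: "z \<in> proper_ancestors T y"
  obtain xs where xs: "is_branch T xs" "tc T x = set xs"
      "proper_ancestors T (hd xs) = proper_ancestors T x"
    using tc_eq_branch_proper_ancestors assms by blast
  obtain j where j: "j < length xs" "y = xs ! j" using assms(2) xs(2) by (metis in_set_conv_nth)
  have "z \<in> proper_ancestors T x \<or> (\<exists>i<j. z = xs ! i)"
    using proper_ancestors_branch_nth[OF xs(1) j(1)] z j(2) xs(3) by simp
  then show "z \<in> proper_ancestors T x \<union> tc T x"
  proof
    assume "\<exists>i<j. z = xs ! i"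
    then show ?thesis using j(1) xs(2) by (metis UnI2 less_trans nth_mem)
  qed simp
qed

lemma burling_subtree:
  assumes "w \<in> tV T"
  shows "burling_tree (subtree w)"
  unfolding burling_tree_def
proof (intro conjI ballI impI)
  show "rooted_tree (subtree w)" using rooted_subtree[OF assms] .
next
  fix v assume "v \<in> tV (subtree w)" "\<not> is_leaf (subtree w) v"
  then show "tlast (subtree w) v \<in> children (subtree w) v"
    using tlast_in_children[of v] children_subtree[OF assms] subtree_vertices_subset[OF assms]
    by (auto simp: is_leaf_def)
next
  fix v assume v: "v \<in> tV (subtree w)" "v = troot (subtree w) \<or> is_last_born (subtree w) v"
  show "tc (subtree w) v = {}"
  proof (cases "v = w")
    case False
    then have "v \<in> tV T" "v \<noteq> troot T" using v by auto
    then show ?thesis using v False tc_root_or_last_born by (simp add: is_last_born_def)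
  qed simp
next
  fix v assume v: "v \<in> tV (subtree w)" "v \<noteq> troot (subtree w) \<and> \<not> is_last_born (subtree w) v"
  hence v': "v \<in> tV T" "w \<in> proper_ancestors T v" "v \<noteq> w" by auto
  have nr: "v \<noteq> troot T" using v' by auto
  have nl: "\<not> is_last_born T v" using v nr v' by (auto simp: is_last_born_def)
  obtain xs where xs: "is_branch T xs" "xs = [] \<or> hd xs = tlast T (tpar T v)" "tc T v = set xs"
    using tc_eq_branch[OF v'(1) nr nl] by blast
  have pv: "tpar T v \<in> tV (subtree w)"
    using rooted_subtree[OF assms] v unfolding rooted_tree_def by auto
  have "xs = [] \<or> hd xs \<in> tV (subtree w)"
  proof (cases "xs = []")
    case False
    hence "tlast T (tpar T v) \<in> children (subtree w) (tpar T v)"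
      using tc_nonempty[OF v'(1)] xs children_subtree[OF assms pv] by simp
    thus ?thesis using xs False by (auto simp: children_def)
  qed simp
  hence "is_branch (subtree w) xs" using branch_imp_branch_subtree[OF assms xs(1)] by simp
  thus "\<exists>xs. is_branch (subtree w) xs \<and> (xs = [] \<or> hd xs = tlast (subtree w) (tpar (subtree w) v))
      \<and> tc (subtree w) v = set xs"
    using xs v' by auto
qed

end

lemma burling_btreeI: "burling_tree T \<Longrightarrow> burling_btree T"
  by (simp add: burling_btree_def burling_btree_axioms_def rooted_btree_def burling_tree_def)

section \<open>From Burling trees to sequential graphs\<close>

locale burling_derivation = burling_btree T for T :: "('a + 'c) btree" +
  fixes G :: "'a ograph"
  assumes derived: "derived T (map_graph Inl G)"
begin

definition top_vertices :: "'a set" where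
  "top_vertices = {v \<in> gV G. proper_ancestors T (Inl v) \<inter> Inl ` gV G = {}}"

definition below :: "'a \<Rightarrow> 'a set" where
  "below s = {x \<in> gV G. Inl s \<in> proper_ancestors T (Inl x)}"

definition lower_out_neighbours :: "'a \<Rightarrow> 'a set" where
  "lower_out_neighbours u = {x \<in> gV G - top_vertices. Inl x \<in> tc T (Inl u)}"

lemma Inl_vertex_in: "x \<in> gV G \<Longrightarrow> Inl x \<in> tV T"
  using derived by (auto simp: derived_Inl_iff)

lemma arcs_subset: "gA G \<subseteq> gV G \<times> gV G"
  using derived by (simp add: derived_Inl_iff)

lemma arc_iff: "a \<in> gV G \<Longrightarrow> b \<in> gV G \<Longrightarrow> (a, b) \<in> gA G \<longleftrightarrow> Inl b \<in> tc T (Inl a)"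
  using derived by (simp add: derived_Inl_iff)

lemma finite_graph_vertices: "finite (gV G)"
proof -
  have "Inl ` gV G \<subseteq> tV T" using Inl_vertex_in by auto
  then have "finite (Inl ` gV G :: ('a + 'c) set)" using finite_vertices by (rule finite_subset)
  then show ?thesis by (simp add: finite_image_iff)
qed

lemma top_set_eq_top_vertices: "top_set T (map_graph Inl G) = Inl ` top_vertices"
proof -
  have "gV (map_graph Inl G) \<subseteq> tV T" using Inl_vertex_in by (auto simp: map_graph_def)
  from top_set_eq[OF this] show ?thesis by (auto simp: map_graph_def top_vertices_def)
qed

lemma top_vertices_subset: "top_vertices \<subseteq> gV G"
  by (auto simp: top_vertices_def)

lemma below_subset: "below s \<subseteq> gV G"
  by (auto simp: below_def)

lemma below_disjoint_top: "s \<in> gV G \<Longrightarrow> x \<in> below s \<Longrightarrow> x \<notin> top_vertices"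
  unfolding below_def top_vertices_def by blast

lemma below_unique:
  assumes "s \<in> top_vertices" "s' \<in> top_vertices" "x \<in> below s" "x \<in> below s'"
  shows "s = s'"
proof -
  have x: "Inl x \<in> tV T" "Inl s \<in> proper_ancestors T (Inl x)" "Inl s' \<in> proper_ancestors T (Inl x)"
    using assms Inl_vertex_in by (auto simp: below_def)
  have "Inl s \<notin> proper_ancestors T (Inl s')" "Inl s' \<notin> proper_ancestors T (Inl s)"
    using assms by (auto simp: top_vertices_def)
  then have "depth T (Inl s) = depth T (Inl s')"
    using proper_ancestors_depth_less[OF x(1,2,3)] proper_ancestors_depth_less[OF x(1,3,2)]
    by (meson linorder_neqE_nat)
  then show ?thesis using ancestors_eq_if_depth_eq[OF x(1), of "Inl s" "Inl s'"] x by simp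
qed

text \<open>The top vertex above \<open>x\<close> is its highest proper ancestor in \<open>G\<close>.\<close>

lemma below_cover:
  assumes "x \<in> gV G" "x \<notin> top_vertices"
  shows "\<exists>s\<in>top_vertices. x \<in> below s"
proof -
  define M where "M = proper_ancestors T (Inl x) \<inter> Inl ` gV G"
  have "M \<noteq> {}" using assms by (simp add: M_def top_vertices_def)
  moreover have "finite M" using finite_graph_vertices by (simp add: M_def)
  ultimately obtain y where y: "y \<in> M" "depth T y = Min (depth T ` M)"
    using Min_in[of "depth T ` M"] by (metis empty_is_image finite_imageI imageE)
  have ymin: "depth T y \<le> depth T z" if "z \<in> M" for z
    using y(2) Min_le[of "depth T ` M"] \<open>finite M\<close> that by simp
  obtain s where s: "y = Inl s" "s \<in> gV G" using y by (auto simp: M_def)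
  have xT: "Inl x \<in> tV T" using Inl_vertex_in assms by simp
  have "s \<in> top_vertices"
  proof (rule ccontr)
    assume "s \<notin> top_vertices"
    then obtain z where z: "z \<in> proper_ancestors T (Inl s)" "z \<in> Inl ` gV G"
      using s by (auto simp: top_vertices_def)
    have "z \<in> M" using proper_ancestors_trans[OF xT _ z(1)] y s z(2) by (simp add: M_def)
    moreover have "depth T z < depth T y"
      using proper_ancestorsD[OF Inl_vertex_in[OF s(2)] z(1)] s by simp
    ultimately show False using ymin by fastforce
  qed
  moreover have "x \<in> below s" using assms y s by (simp add: M_def below_def)
  ultimately show ?thesis by blast
qed

lemma vertices_decomposition: "gV G = top_vertices \<union> (\<Union>v\<in>top_vertices. below v)"
  using below_cover top_vertices_subset below_subset by blast

lemma top_arcD: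
  assumes "(u, v) \<in> gA (induced G top_vertices)"
  shows "Inl v \<in> tc T (Inl u) \<and> u \<in> top_vertices \<and> v \<in> top_vertices"
  using assms arc_iff[of u v] top_vertices_subset by (auto simp: induced_def)

text \<open>Two out-neighbours of a vertex \<open>u\<close> lie on the branch \<open>c(u)\<close>, so one is a proper ancestor of
  the other; hence \<open>u\<close> has at most one out-neighbour among the top vertices.\<close>

lemma in_forest_top: "in_forest (induced G top_vertices)"
  unfolding in_forest_def
proof (intro conjI allI impI)
  have rank: "arc_rank (Inl u) < arc_rank (Inl v)" if "(u, v) \<in> gA (induced G top_vertices)" for u v
    using top_arcD[OF that] arc_rank_less Inl_vertex_in top_vertices_subset by blast
  show "oriented_graph (induced G top_vertices)"
    unfolding oriented_graph_def
  proof (intro conjI allI impI)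
    show "finite (gV (induced G top_vertices))"
      using finite_subset[OF top_vertices_subset finite_graph_vertices] by (simp add: induced_def)
    show "gA (induced G top_vertices) \<subseteq> gV (induced G top_vertices) \<times> gV (induced G top_vertices)"
      by (auto simp: induced_def)
    show "(u, u) \<notin> gA (induced G top_vertices)" for u
      using rank by blast
    show "(v, u) \<notin> gA (induced G top_vertices)" if "(u, v) \<in> gA (induced G top_vertices)" for u v
      using rank[OF that] rank[of v u] by linarith
  qed
  show "acyclic (gA (induced G top_vertices))"
  proof -
    have "gA (induced G top_vertices) \<subseteq> measure (\<lambda>x. arc_rank (Inl x))"
      using rank by auto
    then show ?thesis using wf_subset[OF wf_measure] wf_acyclic by blast
  qed
next
  fix u v w
  assume uv: "(u, v) \<in> gA (induced G top_vertices)" and uw: "(u, w) \<in> gA (induced G top_vertices)"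
  have h: "Inl v \<in> tc T (Inl u)" "Inl w \<in> tc T (Inl u)" "u \<in> top_vertices" "v \<in> top_vertices"
      "w \<in> top_vertices"
    using top_arcD[OF uv] top_arcD[OF uw] by auto
  obtain xs where xs: "is_branch T xs" "tc T (Inl u) = set xs"
    using tc_eq_branch_proper_ancestors[OF Inl_vertex_in] h top_vertices_subset by blast
  obtain i j where i: "i < length xs" "xs ! i = Inl v" and j: "j < length xs" "xs ! j = Inl w"
    using h xs by (metis in_set_conv_nth)
  have "Inl v \<notin> proper_ancestors T (Inl w)" "Inl w \<notin> proper_ancestors T (Inl v)"
    using h top_vertices_subset by (auto simp: top_vertices_def)
  then have "i = j" using branch_nth_proper_ancestor[OF xs(1)] i j by (metis linorder_neqE_nat)
  then show "v = w" using i j by simp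
qed

lemma arc_below:
  assumes "a \<in> below s" "(a, b) \<in> gA G"
  shows "b \<in> below s"
proof -
  have ab: "a \<in> gV G" "b \<in> gV G" using assms(2) arcs_subset by auto
  have "Inl b \<in> tc T (Inl a)" using arc_iff[OF ab] assms(2) by simp
  then have "proper_ancestors T (Inl a) \<subseteq> proper_ancestors T (Inl b)"
    using proper_ancestors_subset_tc Inl_vertex_in[OF ab(1)] by blast
  then show ?thesis using assms(1) ab(2) by (auto simp: below_def)
qed

lemma arc_from_top:
  assumes "a \<in> top_vertices" "(a, b) \<in> gA G" "b \<notin> top_vertices"
  shows "\<exists>s. (a, s) \<in> gA (induced G top_vertices) \<and> b \<in> lower_out_neighbours a"
proof -
  have ab: "a \<in> gV G" "b \<in> gV G" using assms(2) arcs_subset by auto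
  have t: "Inl b \<in> tc T (Inl a)" using arc_iff[OF ab] assms(2) by simp
  obtain s where s: "s \<in> top_vertices" "b \<in> below s" using below_cover ab(2) assms(3) by blast
  have sG: "s \<in> gV G" using s top_vertices_subset by auto
  have "Inl s \<in> proper_ancestors T (Inl b)" using s(2) by (simp add: below_def)
  then have "Inl s \<in> proper_ancestors T (Inl a) \<union> tc T (Inl a)"
    using proper_ancestors_tc_subset[OF Inl_vertex_in[OF ab(1)] t] by blast
  moreover have "Inl s \<notin> proper_ancestors T (Inl a)"
    using assms(1) sG by (auto simp: top_vertices_def)
  ultimately have "(a, s) \<in> gA G" using arc_iff[OF ab(1) sG] by blast
  then have "(a, s) \<in> gA (induced G top_vertices)" using assms(1) s(1) by (simp add: induced_def)
  moreover have "b \<in> lower_out_neighbours a"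
    using ab(2) assms(3) t by (simp add: lower_out_neighbours_def)
  ultimately show ?thesis by blast
qed

lemma arcs_decomposition:
  "gA G = gA (induced G top_vertices) \<union> (\<Union>v\<in>top_vertices. gA (induced G (below v)))
      \<union> {(u, x). \<exists>v. (u, v) \<in> gA (induced G top_vertices) \<and> x \<in> lower_out_neighbours u}"
    (is "_ = ?R")
proof (intro equalityI subsetI)
  fix p assume p: "p \<in> gA G"
  obtain a b where ab: "p = (a, b)" by (cases p)
  have a: "a \<in> gV G" using p ab arcs_subset by auto
  consider "a \<in> top_vertices" "b \<in> top_vertices" | "a \<in> top_vertices" "b \<notin> top_vertices"
    | s where "s \<in> top_vertices" "a \<in> below s"
    using below_cover[OF a] by blast
  then show "p \<in> ?R"
  proof cases
    case 1
    then show ?thesis using p ab by (simp add: induced_def)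
  next
    case 2
    then show ?thesis using arc_from_top p ab by blast
  next
    case 3
    then have "b \<in> below s" using arc_below p ab by blast
    then show ?thesis using 3 p ab by (auto simp: induced_def)
  qed
next
  fix p assume "p \<in> ?R"
  then consider "p \<in> gA (induced G top_vertices)" | v where "p \<in> gA (induced G (below v))"
    | u v x where "p = (u, x)" "(u, v) \<in> gA (induced G top_vertices)" "x \<in> lower_out_neighbours u"
    by blast
  then show "p \<in> gA G"
  proof cases
    case 3
    then have "u \<in> gV G" "x \<in> gV G" "Inl x \<in> tc T (Inl u)"
      using top_vertices_subset by (auto simp: induced_def lower_out_neighbours_def)
    then show ?thesis using arc_iff 3(1) by blast
  qed (auto simp: induced_def)
qed

lemma G_vertices_on_branch_through_top:
  assumes "is_branch T xs" "i < length xs" "xs ! i = Inl v" "v \<in> top_vertices"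
  shows "{x \<in> gV G. Inl x \<in> set xs} = insert v {x \<in> below v. Inl x \<in> set (drop i xs)}"
proof (intro equalityI subsetI)
  fix x assume x: "x \<in> {x \<in> gV G. Inl x \<in> set xs}"
  then obtain j where j: "j < length xs" "xs ! j = Inl x" by (auto simp: in_set_conv_nth)
  have "\<not> j < i"
  proof
    assume "j < i"
    then have "Inl x \<in> proper_ancestors T (Inl v)"
      using branch_nth_proper_ancestor[OF assms(1) _ assms(2)] assms(3) j by metis
    then show False using assms(4) x by (auto simp: top_vertices_def)
  qed
  then consider "j = i" | "i < j" by linarith
  then show "x \<in> insert v {x \<in> below v. Inl x \<in> set (drop i xs)}"
  proof cases
    case 1
    then show ?thesis using j assms(3) by simp
  next
    case 2
    then have "Inl v \<in> proper_ancestors T (Inl x)"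
      using branch_nth_proper_ancestor[OF assms(1) 2 j(1)] assms(3) j(2) by simp
    moreover have "Inl x \<in> set (drop i xs)" using nth_in_set_drop[of i j xs] 2 j by simp
    ultimately show ?thesis using x by (simp add: below_def)
  qed
next
  fix x assume "x \<in> insert v {x \<in> below v. Inl x \<in> set (drop i xs)}"
  then show "x \<in> {x \<in> gV G. Inl x \<in> set xs}"
    using assms nth_mem[OF assms(2)] top_vertices_subset below_subset by (auto dest: in_set_dropD)
qed

lemma lower_out_neighbours_branch:
  assumes "(u, v) \<in> gA (induced G top_vertices)"
  shows "\<exists>ys. root_branch (subtree (Inl v)) ys
    \<and> lower_out_neighbours u = {x \<in> below v. Inl x \<in> set ys}"
proof -
  have h: "Inl v \<in> tc T (Inl u)" "u \<in> top_vertices" "v \<in> top_vertices"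
    using top_arcD[OF assms] by auto
  obtain xs where xs: "is_branch T xs" "tc T (Inl u) = set xs"
    using tc_eq_branch_proper_ancestors[OF Inl_vertex_in] h top_vertices_subset by blast
  obtain i where i: "i < length xs" "xs ! i = Inl v" using h(1) xs(2) by (metis in_set_conv_nth)
  have "lower_out_neighbours u = {x \<in> gV G. Inl x \<in> set xs} - top_vertices"
    using xs(2) by (auto simp: lower_out_neighbours_def)
  also have "\<dots> = {x \<in> below v. Inl x \<in> set (drop i xs)}"
    unfolding G_vertices_on_branch_through_top[OF xs(1) i h(3)]
    using h(3) below_disjoint_top[of v] top_vertices_subset by auto
  finally show ?thesis using root_branch_subtree_drop[OF xs(1) i] by blast
qed

lemma root_branch_G_vertices:
  assumes "root_branch T xs" "{x \<in> gV G. Inl x \<in> set xs} \<noteq> {}"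
  shows "\<exists>v\<in>top_vertices. \<exists>ys. root_branch (subtree (Inl v)) ys
           \<and> {x \<in> gV G. Inl x \<in> set xs} = insert v {x \<in> below v. Inl x \<in> set ys}"
proof -
  define P where "P i \<longleftrightarrow> i < length xs \<and> xs ! i \<in> Inl ` gV G" for i
  have "\<exists>i. P i" using assms(2) by (auto simp: P_def in_set_conv_nth)
  then obtain i where Pi: "P i" and imin: "\<And>j. P j \<Longrightarrow> i \<le> j"
    by (metis LeastI_ex Least_le)
  obtain v where v: "xs ! i = Inl v" "v \<in> gV G" using Pi by (auto simp: P_def)
  have b: "is_branch T xs" and ne: "xs \<noteq> []" using assms Pi by (auto simp: root_branch_def P_def)
  then have hd: "proper_ancestors T (hd xs) = {}" using assms(1) by (simp add: root_branch_def)
  have "proper_ancestors T (Inl v) \<inter> Inl ` gV G = {}"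
  proof (rule ccontr)
    assume "proper_ancestors T (Inl v) \<inter> Inl ` gV G \<noteq> {}"
    then obtain z where z: "z \<in> proper_ancestors T (xs ! i)" "z \<in> Inl ` gV G" using v by auto
    then obtain j where "j < i" "z = xs ! j"
      using proper_ancestors_branch_nth[OF b _ z(1)] Pi hd by (auto simp: P_def)
    then have "P j" using z Pi by (auto simp: P_def)
    then show False using imin \<open>j < i\<close> by fastforce
  qed
  then have "v \<in> top_vertices" using v by (simp add: top_vertices_def)
  then show ?thesis
    using G_vertices_on_branch_through_top[OF b _ v(1)] root_branch_subtree_drop[OF b _ v(1)] Pi
    by (auto simp: P_def)
qed

lemma k_burling_subtree:
  assumes "\<forall>xs. is_branch T xs \<longrightarrow> card (set xs \<inter> Inl ` gV G) \<le> Suc k" "v \<in> top_vertices"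
  shows "k_burling_derived k (subtree (Inl v)) (map_graph Inl (induced G (below v)))"
  unfolding k_burling_derived_def derived_Inl_iff
proof (intro conjI allI impI ballI)
  have vT: "Inl v \<in> tV T" using assms(2) top_vertices_subset Inl_vertex_in by auto
  show "Inl ` gV (induced G (below v)) \<subseteq> tV (subtree (Inl v))"
    using Inl_vertex_in by (auto simp: induced_def below_def)
  show "gA (induced G (below v)) \<subseteq> gV (induced G (below v)) \<times> gV (induced G (below v))"
    by (auto simp: induced_def)
  fix a b assume a: "a \<in> gV (induced G (below v))" and b: "b \<in> gV (induced G (below v))"
  have "a \<noteq> v"
    using a assms(2) below_disjoint_top[of v a] top_vertices_subset by (auto simp: induced_def)
  then show "(a, b) \<in> gA (induced G (below v)) \<longleftrightarrow> Inl b \<in> tc (subtree (Inl v)) (Inl a)"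
    using a b arc_iff below_subset by (auto simp: induced_def)
next
  have vT: "Inl v \<in> tV T" using assms(2) top_vertices_subset Inl_vertex_in by auto
  fix ys assume ys: "is_branch (subtree (Inl v)) ys"
  show "card (set ys \<inter> gV (map_graph Inl (induced G (below v)))) \<le> k"
  proof (cases "ys = []")
    case False
    obtain zs where zs: "is_branch T zs" "set ys \<subseteq> set zs" "Inl v \<in> set zs"
      using branch_subtree_extend[OF vT ys False] by blast
    have "set ys \<inter> gV (map_graph Inl (induced G (below v))) \<subseteq> set zs \<inter> Inl ` gV G - {Inl v}"
      using zs(2) below_subset below_disjoint_top[of v] assms(2) top_vertices_subset
      by (auto simp: map_graph_def induced_def)
    then have "card (set ys \<inter> gV (map_graph Inl (induced G (below v))))
        \<le> card (set zs \<inter> Inl ` gV G - {Inl v})"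
      by (intro card_mono) auto
    also have "\<dots> = card (set zs \<inter> Inl ` gV G) - 1"
      using zs(3) assms(2) top_vertices_subset by (subst card_Diff_singleton) auto
    also have "\<dots> \<le> k" using assms(1) zs(1) by fastforce
    finally show ?thesis .
  qed simp
qed

lemma kseq_base_Suc_of_parts:
  assumes Rs_seq: "\<And>v. v \<in> top_vertices \<Longrightarrow> \<exists>H'. kseq_base k (induced G (below v)) (Rs v) H'"
    and Rs_branch: "\<And>v ys. v \<in> top_vertices \<Longrightarrow> root_branch (subtree (Inl v)) ys
       \<Longrightarrow> {x \<in> below v. Inl x \<in> set ys} \<in> Rs v"
  shows "\<exists>Ss. kseq_base (Suc k) G Ss (induced G top_vertices)
     \<and> (\<forall>xs. root_branch T xs \<longrightarrow> {x \<in> gV G. Inl x \<in> set xs} \<in> Ss)"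
proof -
  define Ss where "Ss = {{}} \<union> {insert v X | v X. v \<in> top_vertices \<and> X \<in> Rs v}"
  have top: "gV (induced G top_vertices) = top_vertices" by (simp add: induced_def)
  have "kseq_base (Suc k) G Ss (induced G top_vertices)"
    unfolding kseq_base.simps top
  proof (intro conjI exI[of _ "\<lambda>v. induced G (below v)"] exI[of _ Rs]
      exI[of _ lower_out_neighbours])
    show "in_forest (induced G top_vertices)" by (rule in_forest_top)
    show "\<forall>u v. (u, v) \<in> gA (induced G top_vertices) \<longrightarrow> lower_out_neighbours u \<in> Rs v"
      using lower_out_neighbours_branch Rs_branch top_arcD by metis
    show "gA G = gA (induced G top_vertices) \<union> (\<Union>v\<in>top_vertices. gA (induced G (below v)))
        \<union> {(u, x). \<exists>v. (u, v) \<in> gA (induced G top_vertices) \<and> x \<in> lower_out_neighbours u}"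
      by (rule arcs_decomposition)
    show "\<forall>v\<in>top_vertices. \<exists>H'. kseq_base k (induced G (below v)) (Rs v) H'"
      using Rs_seq by blast
    show "\<forall>v\<in>top_vertices. gV (induced G (below v)) \<inter> top_vertices = {}"
      using below_disjoint_top top_vertices_subset by (auto simp: induced_def)
    show "\<forall>v\<in>top_vertices. \<forall>w\<in>top_vertices.
        v \<noteq> w \<longrightarrow> gV (induced G (below v)) \<inter> gV (induced G (below w)) = {}"
      using below_unique by (auto simp: induced_def)
    show "gV G = top_vertices \<union> (\<Union>v\<in>top_vertices. gV (induced G (below v)))"
      using vertices_decomposition by (simp add: induced_def)
    show "Ss = {{}} \<union> {insert v X |v X. v \<in> top_vertices \<and> X \<in> Rs v}"
      by (simp add: Ss_def)
  qed
  moreover have "{x \<in> gV G. Inl x \<in> set xs} \<in> Ss" if xs: "root_branch T xs" for xs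
  proof (cases "{x \<in> gV G. Inl x \<in> set xs} = {}")
    case False
    then obtain v ys where v: "v \<in> top_vertices" "root_branch (subtree (Inl v)) ys"
        and eq: "{x \<in> gV G. Inl x \<in> set xs} = insert v {x \<in> below v. Inl x \<in> set ys}"
      using root_branch_G_vertices[OF xs] by blast
    then show ?thesis using Rs_branch[OF v] unfolding Ss_def eq by blast
  qed (simp add: Ss_def)
  ultimately show ?thesis by blast
qed

end

lemma burling_derivationI:
  "burling_tree T \<Longrightarrow> k_burling_derived k T (map_graph Inl G) \<Longrightarrow> burling_derivation T G"
  by (simp add: burling_derivation_def burling_derivation_axioms_def burling_btreeI
      k_burling_derived_def)

theorem sequential_of_k_burling:
  fixes T :: "('a + 'c) btree" and G :: "'a ograph"
  assumes "burling_tree T" "k_burling_derived k T (map_graph Inl G)"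
  shows "\<exists>Ss. kseq_base k G Ss (induced G (burling_derivation.top_vertices T G))
     \<and> (\<forall>xs. root_branch T xs \<longrightarrow> {x \<in> gV G. Inl x \<in> set xs} \<in> Ss)"
  using assms
proof (induction k arbitrary: T G)
  case 0
  interpret burling_derivation T G using burling_derivationI[OF 0] .
  have "gV G = {}"
  proof (rule ccontr)
    assume "gV G \<noteq> {}"
    then obtain v where v: "v \<in> gV G" by blast
    then have "is_branch T [Inl v]" using Inl_vertex_in by (simp add: is_branch_def)
    then show False using 0(2) v by (fastforce simp: k_burling_derived_def map_graph_def)
  qed
  then have "G = empty_graph" "induced G top_vertices = empty_graph"
    using arcs_subset top_vertices_subset by (cases G; auto simp: empty_graph_def induced_def)+
  then show ?case by (auto simp: empty_graph_def)
next
  case (Suc k)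
  interpret burling_derivation T G using burling_derivationI[OF Suc.prems] .
  have bound: "\<forall>xs. is_branch T xs \<longrightarrow> card (set xs \<inter> Inl ` gV G) \<le> Suc k"
    using Suc.prems(2) by (simp add: k_burling_derived_def map_graph_def)
  have "\<forall>v\<in>top_vertices. \<exists>Rs. (\<exists>H'. kseq_base k (induced G (below v)) Rs H')
      \<and> (\<forall>ys. root_branch (subtree (Inl v)) ys \<longrightarrow> {x \<in> below v. Inl x \<in> set ys} \<in> Rs)"
  proof
    fix v assume v: "v \<in> top_vertices"
    then have "Inl v \<in> tV T" using top_vertices_subset Inl_vertex_in by auto
    from Suc.IH[OF burling_subtree[OF this] k_burling_subtree[OF bound v]]
    show "\<exists>Rs. (\<exists>H'. kseq_base k (induced G (below v)) Rs H')
      \<and> (\<forall>ys. root_branch (subtree (Inl v)) ys \<longrightarrow> {x \<in> below v. Inl x \<in> set ys} \<in> Rs)"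
      by (auto simp: induced_def)
  qed
  then obtain Rs
    where Rs_seq: "\<And>v. v \<in> top_vertices \<Longrightarrow> \<exists>H'. kseq_base k (induced G (below v)) (Rs v) H'"
    and Rs_branch: "\<And>v ys. v \<in> top_vertices \<Longrightarrow> root_branch (subtree (Inl v)) ys
       \<Longrightarrow> {x \<in> below v. Inl x \<in> set ys} \<in> Rs v"
    by metis
  then show ?case by (rule kseq_base_Suc_of_parts)
qed

section \<open>Gluing Burling trees\<close>

lemma in_forest_height:
  assumes "in_forest H"
  shows "(u, v) \<in> gA H \<Longrightarrow> card {w. (u, w) \<in> (gA H)\<^sup>+} = Suc (card {w. (v, w) \<in> (gA H)\<^sup>+})"
    and "card {w. (u, w) \<in> (gA H)\<^sup>+} \<le> card (gV H)"
proof -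
  have HA: "gA H \<subseteq> gV H \<times> gV H" and fin: "finite (gV H)"
    and Hf: "\<And>u v w. (u, v) \<in> gA H \<Longrightarrow> (u, w) \<in> gA H \<Longrightarrow> v = w" and acyc: "acyclic (gA H)"
    using assms by (auto simp: in_forest_def oriented_graph_def)
  have tsub: "(gA H)\<^sup>+ \<subseteq> gV H \<times> gV H" by (rule trancl_subset_Sigma[OF HA])
  have fin': "\<And>x. finite {w. (x, w) \<in> (gA H)\<^sup>+}"
    by (rule finite_subset[OF _ fin]) (use tsub in blast)
  show "card {w. (u, w) \<in> (gA H)\<^sup>+} \<le> card (gV H)"
    by (rule card_mono[OF fin]) (use tsub in blast)
  assume uv: "(u, v) \<in> gA H"
  have "{w. (u, w) \<in> (gA H)\<^sup>+} = insert v {w. (v, w) \<in> (gA H)\<^sup>+}"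
  proof (rule set_eqI, rule iffI)
    fix w assume "w \<in> {w. (u, w) \<in> (gA H)\<^sup>+}"
    then have "(u, w) \<in> (gA H)\<^sup>+" by simp
    then show "w \<in> insert v {w. (v, w) \<in> (gA H)\<^sup>+}"
      by (rule converse_tranclE) (use Hf uv in auto)
  qed (use uv in auto)
  moreover have "v \<notin> {w. (v, w) \<in> (gA H)\<^sup>+}" using acyc by (simp add: acyclic_def)
  ultimately show "card {w. (u, w) \<in> (gA H)\<^sup>+} = Suc (card {w. (v, w) \<in> (gA H)\<^sup>+})"
    using fin' by simp
qed

text \<open>The vertices of \<open>T\<close> outside \<open>G\<close> are labelled by \<open>lab\<close>, so that trees built with disjoint
  label ranges can be glued without clashes.\<close>

definition burling_model ::
    "nat \<Rightarrow> (nat \<Rightarrow> nat) \<Rightarrow> 'a ograph \<Rightarrow> 'a set set \<Rightarrow> ('a + nat) btree \<Rightarrow> bool"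
  where "burling_model k lab G Ss T \<longleftrightarrow> burling_tree T \<and> k_burling_derived k T (map_graph Inl G)
    \<and> tV T \<subseteq> Inl ` gV G \<union> Inr ` range lab
    \<and> (\<forall>X\<in>Ss. \<exists>xs. root_branch T xs \<and> set xs \<inter> range Inl = Inl ` X)"

locale burling_gluing =
  fixes G H :: "'a ograph" and Hs :: "'a \<Rightarrow> 'a ograph" and Rs :: "'a \<Rightarrow> 'a set set"
    and R :: "'a \<Rightarrow> 'a set" and k :: nat and lab :: "nat \<Rightarrow> nat" and idx :: "'a \<Rightarrow> nat"
    and Tv :: "'a \<Rightarrow> ('a + nat) btree"
  assumes forest: "in_forest H"
    and inj_lab: "inj lab"
    and inj_idx: "inj_on idx (gV H)"
    and disjoint_top: "\<And>v. v \<in> gV H \<Longrightarrow> gV (Hs v) \<inter> gV H = {}"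
    and disjoint_parts: "\<And>v w. v \<in> gV H \<Longrightarrow> w \<in> gV H \<Longrightarrow> v \<noteq> w \<Longrightarrow> gV (Hs v) \<inter> gV (Hs w) = {}"
    and R_in_Rs: "\<And>u v. (u, v) \<in> gA H \<Longrightarrow> R u \<in> Rs v"
    and vertices_G: "gV G = gV H \<union> (\<Union>v\<in>gV H. gV (Hs v))"
    and arcs_G: "gA G = gA H \<union> (\<Union>v\<in>gV H. gA (Hs v)) \<union> {(u, x). \<exists>v. (u, v) \<in> gA H \<and> x \<in> R u}"
    and models: "\<And>v. v \<in> gV H \<Longrightarrow>
      burling_model k (\<lambda>m. lab (prod_encode (Suc (idx v), m))) (Hs v) (Rs v) (Tv v)"
begin

abbreviation "S \<equiv> gV H"

lemma finite_top: "finite S"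
  using forest by (simp add: in_forest_def oriented_graph_def)

lemma arcs_H_subset: "gA H \<subseteq> S \<times> S"
  using forest by (simp add: in_forest_def oriented_graph_def)

lemma out_unique: "(u, v) \<in> gA H \<Longrightarrow> (u, w) \<in> gA H \<Longrightarrow> v = w"
  using forest by (simp add: in_forest_def)

text \<open>In an in-forest the vertices reachable from \<open>u\<close> form the path from \<open>u\<close> to its root.\<close>

definition height :: "'a \<Rightarrow> nat" where
  "height u = card {w. (u, w) \<in> (gA H)\<^sup>+}"

lemma height_arc: "(u, v) \<in> gA H \<Longrightarrow> height u = Suc (height v)"
  using in_forest_height(1)[OF forest] by (simp add: height_def)

lemma height_le: "height u \<le> card S"
  using in_forest_height(2)[OF forest] by (simp add: height_def)

lemma burling_Tv: "v \<in> S \<Longrightarrow> burling_tree (Tv v)"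
  using models by (simp add: burling_model_def)

lemma k_burling_Tv: "v \<in> S \<Longrightarrow> k_burling_derived k (Tv v) (map_graph Inl (Hs v))"
  using models by (simp add: burling_model_def)

lemma vertices_Tv:
  "v \<in> S \<Longrightarrow> tV (Tv v) \<subseteq> Inl ` gV (Hs v) \<union> Inr ` range (\<lambda>m. lab (prod_encode (Suc (idx v), m)))"
  using models by (simp add: burling_model_def)

lemma branches_Tv:
  "v \<in> S \<Longrightarrow> X \<in> Rs v \<Longrightarrow> \<exists>xs. root_branch (Tv v) xs \<and> set xs \<inter> range Inl = Inl ` X"
  using models by (simp add: burling_model_def)

definition spine :: "nat \<Rightarrow> 'a + nat" where
  "spine j = Inr (lab (prod_encode (0, j)))"

definition owner :: "'a + nat \<Rightarrow> 'a" where
  "owner x = (SOME v. v \<in> S \<and> x \<in> tV (Tv v))"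

definition out_neighbour :: "'a \<Rightarrow> 'a" where
  "out_neighbour u = (SOME v. (u, v) \<in> gA H)"

definition subroot :: "'a \<Rightarrow> 'a + nat" where
  "subroot v = troot (Tv v)"

definition tail_branch :: "'a \<Rightarrow> ('a + nat) list" where
  "tail_branch u = (SOME ys. root_branch (Tv (out_neighbour u)) ys \<and> set ys \<inter> range Inl = Inl ` R u)"

text \<open>The root is \<open>spine (N + 1)\<close>, where \<open>N = card S\<close> bounds the heights in \<open>H\<close>, and \<open>spine j\<close>
  is the last-born child of \<open>spine (j + 1)\<close>. A top vertex \<open>u\<close> is a child of \<open>spine (height u + 1)\<close>
  and has the root of \<open>Tv u\<close> as its only child. If \<open>u\<close> has the out-neighbour \<open>v\<close> in \<open>H\<close>, then
  \<open>c(u)\<close> descends from \<open>spine (height u)\<close> through \<open>v\<close> into a branch of \<open>Tv v\<close> realising \<open>R u\<close>;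
  this is a branch starting at the last-born sibling of \<open>u\<close> because \<open>height u = height v + 1\<close>.\<close>

definition glued :: "('a + nat) btree" where
  "glued = \<lparr>tV = spine ` {..Suc (card S)} \<union> Inl ` S \<union> (\<Union>v\<in>S. tV (Tv v)),
     troot = spine (Suc (card S)),
     tpar = (\<lambda>x. if x \<in> range spine then spine (Suc (inv spine x))
                 else if x \<in> Inl ` S then spine (Suc (height (projl x)))
                 else if x = subroot (owner x) then Inl (owner x)
                 else tpar (Tv (owner x)) x),
     tlast = (\<lambda>x. if x \<in> range spine then spine (inv spine x - 1)
                  else if x \<in> Inl ` S then subroot (projl x)
                  else tlast (Tv (owner x)) x),
     tc = (\<lambda>x. if x \<in> range spine then {}
               else if x \<in> Inl ` S then
                 (if \<exists>v. (projl x, v) \<in> gA H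
                  then set (spine (height (projl x)) # Inl (out_neighbour (projl x)) # tail_branch (projl x))
                  else {})
               else tc (Tv (owner x)) x)\<rparr>"

lemma spine_eq_iff[simp]: "spine i = spine j \<longleftrightarrow> i = j"
  using inj_lab by (simp add: spine_def inj_eq)

lemma spine_neq_Inl[simp]: "spine j \<noteq> Inl u" "Inl u \<noteq> spine j" by (simp_all add: spine_def)

lemma inv_spine [simp]: "inv spine (spine j) = j"
  by (rule inv_f_f) (simp add: inj_def)

lemma Inl_not_spine [simp]: "Inl u \<notin> range spine"
  by (auto simp: spine_def)

lemma Tv_vertex_not_spine: assumes "v \<in> S" "x \<in> tV (Tv v)" shows "x \<notin> range spine"
proof
  assume "x \<in> range spine" then obtain j where j: "x = spine j" by auto
  have "x \<in> Inl ` gV (Hs v) \<union> Inr ` range (\<lambda>m. lab (prod_encode (Suc (idx v), m)))"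
    using vertices_Tv assms by blast
  then obtain m where "x = Inr (lab (prod_encode (Suc (idx v), m)))" using j by auto
  hence "lab (prod_encode (Suc (idx v), m)) = lab (prod_encode (0, j))"
    using j by (simp add: spine_def)
  thus False using inj_lab by (simp add: inj_eq)
qed

lemma Tv_vertex_not_top: assumes "v \<in> S" "x \<in> tV (Tv v)" shows "x \<notin> Inl ` S"
proof
  assume "x \<in> Inl ` S" then obtain u where u: "x = Inl u" "u \<in> S" by blast
  have "x \<in> Inl ` gV (Hs v) \<union> Inr ` range (\<lambda>m. lab (prod_encode (Suc (idx v), m)))"
    using vertices_Tv assms by blast
  hence "u \<in> gV (Hs v)" using u by auto
  thus False using disjoint_top[OF assms(1)] u by auto
qed

lemma Tv_vertices_disjoint: assumes "v \<in> S" "w \<in> S" "x \<in> tV (Tv v)" "x \<in> tV (Tv w)" shows "v = w"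
proof (rule ccontr)
  assume ne: "v \<noteq> w"
  have a: "x \<in> Inl ` gV (Hs v) \<union> Inr ` range (\<lambda>m. lab (prod_encode (Suc (idx v), m)))"
    using vertices_Tv assms by blast
  have b: "x \<in> Inl ` gV (Hs w) \<union> Inr ` range (\<lambda>m. lab (prod_encode (Suc (idx w), m)))"
    using vertices_Tv assms by blast
  show False
  proof (cases x)
    case (Inl u)
    hence "u \<in> gV (Hs v)" "u \<in> gV (Hs w)" using a b by auto
    thus False using disjoint_parts[OF assms(1,2) ne] by auto
  next
    case (Inr n)
    obtain m where m: "n = lab (prod_encode (Suc (idx v), m))" using a Inr by auto
    obtain m' where m': "n = lab (prod_encode (Suc (idx w), m'))" using b Inr by auto
    have "lab (prod_encode (Suc (idx v), m)) = lab (prod_encode (Suc (idx w), m'))"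
      using m m' by simp
    hence "idx v = idx w" using inj_lab by (simp add: inj_eq)
    thus False using inj_idx assms ne by (meson inj_onD)
  qed
qed

lemma owner_eq: assumes "v \<in> S" "x \<in> tV (Tv v)" shows "owner x = v"
  unfolding owner_def using assms Tv_vertices_disjoint by (metis (mono_tags, lifting) someI_ex)

lemma subroot_in: "v \<in> S \<Longrightarrow> subroot v \<in> tV (Tv v)"
  using burling_Tv unfolding subroot_def burling_tree_def rooted_tree_def by blast

lemma glued_simps [simp]:
  "tV glued = spine ` {..Suc (card S)} \<union> Inl ` S \<union> (\<Union>v\<in>S. tV (Tv v))"
  "troot glued = spine (Suc (card S))"
  by (simp_all add: glued_def)

lemma tpar_glued_spine[simp]: "tpar glued (spine j) = spine (Suc j)" by (simp add: glued_def)
lemma tpar_glued_top: "u \<in> S \<Longrightarrow> tpar glued (Inl u) = spine (Suc (height u))" by (simp add: glued_def)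
lemma tpar_glued_subroot: assumes "v \<in> S" shows "tpar glued (subroot v) = Inl v"
proof -
  have "subroot v \<notin> range spine" using Tv_vertex_not_spine assms subroot_in by blast
  moreover have "owner (subroot v) = v" using owner_eq assms subroot_in by blast
  moreover have "subroot v \<notin> Inl ` S" using Tv_vertex_not_top assms subroot_in by blast
  ultimately show ?thesis by (simp add: glued_def)
qed
lemma tpar_glued_Tv:
  assumes "v \<in> S" "x \<in> tV (Tv v)" "x \<noteq> subroot v"
  shows "tpar glued x = tpar (Tv v) x"
  using Tv_vertex_not_spine[OF assms(1,2)] Tv_vertex_not_top[OF assms(1,2)] owner_eq[OF assms(1,2)]
    assms(3)
  by (simp add: glued_def)

lemma tlast_glued_spine[simp]: "tlast glued (spine j) = spine (j - 1)" by (simp add: glued_def)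
lemma tlast_glued_top: "u \<in> S \<Longrightarrow> tlast glued (Inl u) = subroot u" by (simp add: glued_def)
lemma tlast_glued_Tv: assumes "v \<in> S" "x \<in> tV (Tv v)" shows "tlast glued x = tlast (Tv v) x"
  using Tv_vertex_not_spine[OF assms(1,2)] Tv_vertex_not_top[OF assms(1,2)] owner_eq[OF assms(1,2)]
    by (simp add: glued_def)

lemma tc_glued_spine[simp]: "tc glued (spine j) = {}" by (simp add: glued_def)
lemma tc_glued_top:
  "u \<in> S \<Longrightarrow> tc glued (Inl u) = (if \<exists>v. (u, v) \<in> gA H
     then set (spine (height u) # Inl (out_neighbour u) # tail_branch u) else {})"
  by (simp add: glued_def)
lemma tc_glued_Tv: assumes "v \<in> S" "x \<in> tV (Tv v)" shows "tc glued x = tc (Tv v) x"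
  using Tv_vertex_not_spine[OF assms(1,2)] Tv_vertex_not_top[OF assms(1,2)] owner_eq[OF assms(1,2)]
    by (simp add: glued_def)

lemma burling_btree_Tv: "v \<in> S \<Longrightarrow> burling_btree (Tv v)" using burling_Tv burling_btreeI by blast

lemma troot_Tv: "v \<in> S \<Longrightarrow> troot (Tv v) = subroot v" by (simp add: subroot_def)

lemma Tv_vertex_in_glued: "v \<in> S \<Longrightarrow> x \<in> tV (Tv v) \<Longrightarrow> x \<in> tV glued" by auto

lemma Tv_vertex_neq_spine: "v \<in> S \<Longrightarrow> x \<in> tV (Tv v) \<Longrightarrow> x \<noteq> spine j" using Tv_vertex_not_spine by blast

lemma glued_vertex_cases:
  assumes "x \<in> tV glued"
  obtains (spine) j where "j \<le> Suc (card S)" "x = spine j"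
    | (top) u where "u \<in> S" "x = Inl u"
    | (sub) v where "v \<in> S" "x \<in> tV (Tv v)"
  using assms by auto

lemma tpar_Tv_in: assumes "v \<in> S" "x \<in> tV (Tv v)" "x \<noteq> subroot v" shows "tpar (Tv v) x \<in> tV (Tv v)"
  using burling_Tv[OF assms(1)] assms
    unfolding burling_tree_def rooted_tree_def subroot_def by blast

lemma children_glued_Tv:
  assumes v: "v \<in> S" and a: "a \<in> tV (Tv v)"
  shows "children glued a = children (Tv v) a"
proof (rule set_eqI, rule iffI)
  fix b assume b: "b \<in> children glued a"
  hence b': "b \<in> tV glued" "b \<noteq> spine (Suc (card S))" "tpar glued b = a"
    by (auto simp: children_def)
  show "b \<in> children (Tv v) a"
    using b'(1)
  proof (cases rule: glued_vertex_cases)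
    case (spine j) then show ?thesis
      using b' Tv_vertex_neq_spine[OF v a] by (metis tpar_glued_spine)
  next
    case (top u) then show ?thesis using b' Tv_vertex_neq_spine[OF v a] tpar_glued_top by metis
  next
    case (sub w)
    show ?thesis
    proof (cases "b = subroot w")
      case True
      hence "a = Inl w" using b' tpar_glued_subroot sub by simp
      thus ?thesis using Tv_vertex_not_top[OF v a] sub by auto
    next
      case False
      have "tpar (Tv w) b = a" using b' tpar_glued_Tv[OF sub False] by simp
      hence "a \<in> tV (Tv w)" using tpar_Tv_in[OF sub False] by simp
      hence "w = v" using Tv_vertices_disjoint[OF v sub(1) a] by simp
      thus ?thesis
        using sub False b' tpar_glued_Tv[OF sub False] by (simp add: children_def subroot_def)
    qed
  qed
next
  fix b assume b: "b \<in> children (Tv v) a"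
  hence b': "b \<in> tV (Tv v)" "b \<noteq> subroot v" "tpar (Tv v) b = a"
    by (auto simp: children_def subroot_def)
  thus "b \<in> children glued a"
    using Tv_vertex_in_glued[OF v] tpar_glued_Tv[OF v] Tv_vertex_neq_spine[OF v]
      by (simp add: children_def)
qed

lemma children_glued_top: assumes v: "v \<in> S" shows "children glued (Inl v) = {subroot v}"
proof (rule set_eqI, rule iffI)
  fix b assume b: "b \<in> children glued (Inl v)"
  hence b': "b \<in> tV glued" "b \<noteq> spine (Suc (card S))" "tpar glued b = Inl v"
    by (auto simp: children_def)
  show "b \<in> {subroot v}"
    using b'(1)
  proof (cases rule: glued_vertex_cases)
    case (spine j) then show ?thesis using b' by simp
  next
    case (top u) then show ?thesis using b' tpar_glued_top by simp
  next
    case (sub w)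
    show ?thesis
    proof (cases "b = subroot w")
      case True
      hence "w = v" using b' tpar_glued_subroot sub by simp
      thus ?thesis using True by simp
    next
      case False
      have "tpar (Tv w) b = Inl v" using b' tpar_glued_Tv[OF sub False] by simp
      hence "Inl v \<in> tV (Tv w)" using tpar_Tv_in[OF sub False] by simp
      thus ?thesis using Tv_vertex_not_top[OF sub(1)] v by auto
    qed
  qed
next
  fix b assume "b \<in> {subroot v}"
  thus "b \<in> children glued (Inl v)"
    using subroot_in[OF v] Tv_vertex_in_glued[OF v] tpar_glued_subroot[OF v]
      Tv_vertex_neq_spine[OF v]
    by (simp add: children_def)
qed

lemma children_glued_spine_0: "children glued (spine 0) = {}"
proof -
  have "b \<notin> children glued (spine 0)" for b
  proof
    assume b: "b \<in> children glued (spine 0)"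
    hence b': "b \<in> tV glued" "tpar glued b = spine 0" by (auto simp: children_def)
    show False
      using b'(1)
    proof (cases rule: glued_vertex_cases)
      case (spine j) then show ?thesis using b' by simp
    next
      case (top u) then show ?thesis using b' tpar_glued_top by simp
    next
      case (sub w)
      show ?thesis
      proof (cases "b = subroot w")
        case True thus ?thesis using b' tpar_glued_subroot sub by simp
      next
        case False
        have "tpar (Tv w) b = spine 0" using b' tpar_glued_Tv[OF sub False] by simp
        hence "spine 0 \<in> tV (Tv w)" using tpar_Tv_in[OF sub False] by simp
        thus ?thesis using Tv_vertex_neq_spine[OF sub(1)] by blast
      qed
    qed
  qed
  thus ?thesis by blast
qed

lemma spine_in_children_glued: "j \<le> (card S) \<Longrightarrow> spine j \<in> children glued (spine (Suc j))"
  by (simp add: children_def)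

lemma top_in_children_glued: "u \<in> S \<Longrightarrow> Inl u \<in> children glued (spine (Suc (height u)))"
  by (simp add: children_def tpar_glued_top)

lemma tpar_glued_pow_spine: "(tpar glued ^^ m) (spine j) = spine (j + m)"
  by (induction m) auto

lemma tpar_glued_pow_top: "u \<in> S \<Longrightarrow> (tpar glued ^^ Suc m) (Inl u) = spine (Suc (height u) + m)"
  by (simp add: funpow_Suc_right tpar_glued_pow_spine tpar_glued_top del: funpow.simps)

lemma tpar_glued_pow_Tv: assumes v: "v \<in> S" and x: "x \<in> tV (Tv v)"
  shows "m \<le> depth (Tv v) x \<Longrightarrow> (tpar glued ^^ m) x = (tpar (Tv v) ^^ m) x"
proof (induction m)
  case 0 then show ?case by simp
next
  case (Suc m)
  interpret rooted_btree "Tv v" using burling_btree_Tv[OF v] by (simp add: burling_btree_def)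
  let ?y = "(tpar (Tv v) ^^ m) x"
  have y: "?y \<in> tV (Tv v)" "depth (Tv v) ?y = depth (Tv v) x - m"
    using tpar_pow_in[OF x] Suc.prems by auto
  have "?y \<noteq> subroot v" using y Suc.prems depth_eq_0_iff[of ?y] troot_Tv[OF v] by auto
  thus ?case using Suc tpar_glued_Tv[OF v y(1)] by simp
qed

lemma tpar_glued_pow_Tv_depth: assumes v: "v \<in> S" and x: "x \<in> tV (Tv v)"
  shows "(tpar glued ^^ Suc (depth (Tv v) x)) x = Inl v"
proof -
  interpret rooted_btree "Tv v" using burling_btree_Tv[OF v] by (simp add: burling_btree_def)
  have "(tpar glued ^^ depth (Tv v) x) x = subroot v"
    using tpar_glued_pow_Tv[OF v x order_refl] tpar_pow_depth[OF x] troot_Tv[OF v] by simp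
  thus ?thesis using tpar_glued_subroot[OF v] by simp
qed

lemma glued_reaches_spine:
  assumes "x \<in> tV glued"
  shows "\<exists>n j. j \<le> Suc (card S) \<and> (tpar glued ^^ n) x = spine j"
  using assms
proof (cases rule: glued_vertex_cases)
  case (spine j) then show ?thesis by (metis funpow_0)
next
  case (top u) then show ?thesis
    using tpar_glued_pow_top[of u 0] height_le[of u] by (metis add_0_right Suc_le_mono le_SucI)
next
  case (sub v)
  have "(tpar glued ^^ Suc (Suc (depth (Tv v) x))) x = spine (Suc (height v))"
    using tpar_glued_pow_Tv_depth[OF sub] tpar_glued_top[OF sub(1)] by simp
  thus ?thesis using height_le[of v] by (metis Suc_le_mono)
qed

lemma rooted_glued: "rooted_tree glued"
  unfolding rooted_tree_def
proof (intro conjI ballI)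
  have "\<forall>v\<in>S. finite (tV (Tv v))"
    using burling_Tv unfolding burling_tree_def rooted_tree_def by blast
  thus "finite (tV glued)" using finite_top by simp
  show "troot glued \<in> tV glued" by simp
next
  fix x assume x: "x \<in> tV glued - {troot glued}"
  hence x': "x \<in> tV glued" "x \<noteq> spine (Suc (card S))" by auto
  show "tpar glued x \<in> tV glued" using x'(1)
  proof (cases rule: glued_vertex_cases)
    case (spine j) then show ?thesis using x' by simp
  next
    case (top u) then show ?thesis using height_le tpar_glued_top by simp
  next
    case (sub v)
    show ?thesis
    proof (cases "x = subroot v")
      case True then show ?thesis using tpar_glued_subroot sub by simp
    next
      case False then show ?thesis
        using tpar_glued_Tv[OF sub False] tpar_Tv_in[OF sub False] sub(1) by auto
    qed
  qed
next
  fix x assume x: "x \<in> tV glued"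
  obtain n j where nj: "j \<le> Suc (card S)" "(tpar glued ^^ n) x = spine j"
    using glued_reaches_spine[OF x] by blast
  have "(tpar glued ^^ (Suc (card S) - j + n)) x
      = (tpar glued ^^ (Suc (card S) - j)) ((tpar glued ^^ n) x)"
    by (simp add: funpow_add)
  also have "\<dots> = spine (Suc (card S))" using nj by (simp add: tpar_glued_pow_spine)
  finally have "(tpar glued ^^ (Suc (card S) - j + n)) x = spine (Suc (card S))" .
  thus "\<exists>n. (tpar glued ^^ n) x = troot glued" by auto
qed

lemma branch_Tv_imp_branch_glued:
  assumes v: "v \<in> S" and b: "is_branch (Tv v) xs"
  shows "is_branch glued xs"
proof -
  have s: "set xs \<subseteq> tV (Tv v)" using b by (simp add: is_branch_def)
  have "successively (\<lambda>a b. b \<in> children glued a) xs"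
    using b unfolding is_branch_def
    by (elim conjE successively_mono) (use s children_glued_Tv[OF v] in auto)
  thus ?thesis using s Tv_vertex_in_glued[OF v] by (auto simp: is_branch_def)
qed

lemma branch_glued_imp_branch_Tv:
  assumes v: "v \<in> S" and b: "is_branch glued xs" and h: "xs \<noteq> []" "hd xs \<in> tV (Tv v)"
  shows "is_branch (Tv v) xs"
proof -
  have cl: "b' \<in> tV (Tv v)" if "a \<in> tV (Tv v)" "b' \<in> children glued a" for a b'
  proof -
    have "b' \<in> children (Tv v) a" using that children_glued_Tv[OF v] by blast
    thus ?thesis by (simp add: children_def)
  qed
  have s: "set xs \<subseteq> tV (Tv v)"
    by (rule successively_children_closed[of glued xs]) (use b h cl in \<open>auto simp: is_branch_def\<close>)
  have "successively (\<lambda>a b. b \<in> children (Tv v) a) xs"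
    using b unfolding is_branch_def
    by (elim conjE successively_mono) (use s children_glued_Tv[OF v] in auto)
  thus ?thesis using s by (auto simp: is_branch_def)
qed

lemma out_neighbour_eq: "(u, v) \<in> gA H \<Longrightarrow> out_neighbour u = v"
  unfolding out_neighbour_def using out_unique by (metis someI_ex)

lemma arc_H_ends: "(u, v) \<in> gA H \<Longrightarrow> u \<in> S \<and> v \<in> S" using arcs_H_subset by auto

lemma tail_branch_props: assumes uv: "(u, v) \<in> gA H"
  shows "is_branch (Tv v) (tail_branch u) \<and> (tail_branch u = [] \<or> hd (tail_branch u) = subroot v)
    \<and> set (tail_branch u) \<inter> range Inl = Inl ` R u"
proof -
  have "\<exists>ys. root_branch (Tv v) ys \<and> set ys \<inter> range Inl = Inl ` R u"
    using branches_Tv[OF _ R_in_Rs[OF uv]] arc_H_ends[OF uv] by auto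
  then have "root_branch (Tv v) (tail_branch u) \<and> set (tail_branch u) \<inter> range Inl = Inl ` R u"
    unfolding tail_branch_def out_neighbour_eq[OF uv] by (rule someI_ex)
  then show ?thesis by (simp add: root_branch_def subroot_def)
qed

lemma is_last_born_glued_Tv: assumes v: "v \<in> S" and x: "x \<in> tV (Tv v)" and nr: "x \<noteq> subroot v"
  shows "is_last_born glued x \<longleftrightarrow> is_last_born (Tv v) x"
proof -
  have p: "tpar glued x = tpar (Tv v) x" using tpar_glued_Tv[OF v x nr] .
  have "tpar (Tv v) x \<in> tV (Tv v)" using tpar_Tv_in[OF v x nr] .
  hence "tlast glued (tpar glued x) = tlast (Tv v) (tpar (Tv v) x)"
    using p tlast_glued_Tv[OF v] by simp
  thus ?thesis using nr Tv_vertex_neq_spine[OF v x] p by (simp add: is_last_born_def subroot_def)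
qed

lemma tlast_glued_in_children:
  assumes x: "x \<in> tV glued" "\<not> is_leaf glued x"
  shows "tlast glued x \<in> children glued x"
  using x(1)
proof (cases rule: glued_vertex_cases)
  case (spine j)
  show ?thesis
  proof (cases j)
    case 0 then show ?thesis using x spine children_glued_spine_0 by (simp add: is_leaf_def)
  next
    case (Suc i) then show ?thesis using spine spine_in_children_glued[of i] by simp
  qed
next
  case (top u) then show ?thesis using children_glued_top tlast_glued_top by simp
next
  case (sub v)
  interpret burling_btree "Tv v" using burling_btree_Tv[OF sub(1)] .
  show ?thesis
    using x tlast_in_children[of x] children_glued_Tv[OF sub] tlast_glued_Tv[OF sub] sub
    by (simp add: is_leaf_def)
qed

lemma tc_glued_root_or_last_born:
  assumes x: "x \<in> tV glued" "x = troot glued \<or> is_last_born glued x"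
  shows "tc glued x = {}"
  using x(1)
proof (cases rule: glued_vertex_cases)
  case (top u)
  have "\<not> is_last_born glued x" using top tpar_glued_top by (simp add: is_last_born_def)
  then show ?thesis using x top by simp
next
  case (sub v)
  interpret burling_btree "Tv v" using burling_btree_Tv[OF sub(1)] .
  show ?thesis
  proof (cases "x = subroot v")
    case True then show ?thesis
      using tc_glued_Tv[OF sub] tc_root_or_last_born[of x] sub troot_Tv by simp
  next
    case False
    have "is_last_born glued x" using x Tv_vertex_neq_spine[OF sub] by auto
    then have "is_last_born (Tv v) x" using is_last_born_glued_Tv[OF sub False] by simp
    then show ?thesis using tc_glued_Tv[OF sub] tc_root_or_last_born[of x] sub by simp
  qed
qed simp

lemma branch_glued_from_top:
  assumes uv: "(u, v) \<in> gA H"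
  shows "is_branch glued (spine (height u) # Inl v # tail_branch u)"
proof -
  have v: "v \<in> S" using arc_H_ends[OF uv] by simp
  have bp: "is_branch (Tv v) (tail_branch u)" "tail_branch u = [] \<or> hd (tail_branch u) = subroot v"
    using tail_branch_props[OF uv] by auto
  have bT: "is_branch glued (tail_branch u)" using branch_Tv_imp_branch_glued[OF v bp(1)] .
  have "Inl v \<in> children glued (spine (height u))"
    using top_in_children_glued[OF v] height_arc[OF uv] by simp
  moreover have "tail_branch u = [] \<or> hd (tail_branch u) \<in> children glued (Inl v)"
    using bp children_glued_top[OF v] by auto
  ultimately have
    "successively (\<lambda>a b. b \<in> children glued a) (spine (height u) # Inl v # tail_branch u)"
    using bT unfolding is_branch_def by (cases "tail_branch u") auto
  moreover have "set (spine (height u) # Inl v # tail_branch u) \<subseteq> tV glued"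
    using bT v height_le[of u] by (auto simp: is_branch_def)
  ultimately show ?thesis by (simp add: is_branch_def)
qed

lemma tc_glued_eq_branch:
  assumes x: "x \<in> tV glued" "x \<noteq> troot glued" "\<not> is_last_born glued x"
  shows "\<exists>xs. is_branch glued xs \<and> (xs = [] \<or> hd xs = tlast glued (tpar glued x))
    \<and> tc glued x = set xs"
  using x(1)
proof (cases rule: glued_vertex_cases)
  case (spine j)
  then have "is_last_born glued x" using x(2) by (simp add: is_last_born_def)
  then show ?thesis using x(3) by simp
next
  case (top u)
  show ?thesis
  proof (cases "\<exists>v. (u, v) \<in> gA H")
    case False
    then show ?thesis
      using top tc_glued_top[of u] by (intro exI[of _ "[]"]) (simp add: is_branch_def)
  next
    case True
    then obtain v where uv: "(u, v) \<in> gA H" by blast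
    then show ?thesis
      using branch_glued_from_top[OF uv] top tpar_glued_top tc_glued_top[of u]
        out_neighbour_eq[OF uv]
      by fastforce
  qed
next
  case (sub v)
  interpret burling_btree "Tv v" using burling_btree_Tv[OF sub(1)] .
  have nr: "x \<noteq> subroot v"
  proof
    assume "x = subroot v"
    then have "is_last_born glued x"
      using tpar_glued_subroot[OF sub(1)] tlast_glued_top[OF sub(1)] Tv_vertex_neq_spine[OF sub]
      by (simp add: is_last_born_def)
    then show False using x by simp
  qed
  have nl: "\<not> is_last_born (Tv v) x" using is_last_born_glued_Tv[OF sub nr] x by simp
  obtain xs where xs: "is_branch (Tv v) xs" "xs = [] \<or> hd xs = tlast (Tv v) (tpar (Tv v) x)"
      "tc (Tv v) x = set xs"
    using tc_eq_branch[OF sub(2) _ nl] nr troot_Tv[OF sub(1)] by auto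
  have "tlast (Tv v) (tpar (Tv v) x) = tlast glued (tpar glued x)"
    using tpar_glued_Tv[OF sub nr] tlast_glued_Tv[OF sub(1) tpar_Tv_in[OF sub nr]] by simp
  then show ?thesis
    using xs branch_Tv_imp_branch_glued[OF sub(1) xs(1)] tc_glued_Tv[OF sub] by metis
qed

lemma burling_glued: "burling_tree glued"
  unfolding burling_tree_def
  using rooted_glued tlast_glued_in_children tc_glued_root_or_last_born tc_glued_eq_branch by blast

lemma derived_Tv: assumes v: "v \<in> S"
  shows "Inl ` gV (Hs v) \<subseteq> tV (Tv v)" "gA (Hs v) \<subseteq> gV (Hs v) \<times> gV (Hs v)"
    "\<And>a b. a \<in> gV (Hs v) \<Longrightarrow> b \<in> gV (Hs v) \<Longrightarrow> (a, b) \<in> gA (Hs v) \<longleftrightarrow> Inl b \<in> tc (Tv v) (Inl a)"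
    "\<And>ys. is_branch (Tv v) ys \<Longrightarrow> card (set ys \<inter> Inl ` gV (Hs v)) \<le> k"
  using k_burling_Tv[OF v]
    unfolding k_burling_derived_def derived_Inl_iff by (auto simp: map_graph_def)

lemma Inl_in_Tv_imp: "v \<in> S \<Longrightarrow> Inl x \<in> tV (Tv v) \<Longrightarrow> x \<in> gV (Hs v)"
  using vertices_Tv by fastforce

lemma R_subset: assumes uv: "(u, v) \<in> gA H" shows "R u \<subseteq> gV (Hs v)"
proof
  fix x assume x: "x \<in> R u"
  have v: "v \<in> S" using arc_H_ends[OF uv] by simp
  have "Inl x \<in> set (tail_branch u)" using tail_branch_props[OF uv] x by blast
  hence "Inl x \<in> tV (Tv v)" using tail_branch_props[OF uv] by (auto simp: is_branch_def)
  thus "x \<in> gV (Hs v)" using Inl_in_Tv_imp[OF v] by simp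
qed

lemma arc_G_iff:
  "(a, b) \<in> gA G \<longleftrightarrow> (a, b) \<in> gA H \<or> (\<exists>w\<in>S. (a, b) \<in> gA (Hs w)) \<or> (\<exists>v. (a, v) \<in> gA H \<and> b \<in> R a)"
  using arcs_G by blast

lemma top_in_G: "u \<in> S \<Longrightarrow> u \<in> gV G" using vertices_G by blast
lemma part_in_G: "w \<in> S \<Longrightarrow> x \<in> gV (Hs w) \<Longrightarrow> x \<in> gV G" using vertices_G by blast
lemma vertex_G_cases: "x \<in> gV G \<Longrightarrow> x \<in> S \<or> (\<exists>w\<in>S. x \<in> gV (Hs w))" using vertices_G by blast

lemma Inl_G_vertices_in_glued: "Inl ` gV G \<subseteq> tV glued"
proof
  fix y :: "'a + nat" assume "y \<in> Inl ` gV G"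
  then obtain x where x: "y = Inl x" "x \<in> gV G" by blast
  from vertex_G_cases[OF x(2)] show "y \<in> tV glued"
  proof
    assume "\<exists>w\<in>S. x \<in> gV (Hs w)"
    then show ?thesis using derived_Tv(1) x Tv_vertex_in_glued by blast
  qed (use x in simp)
qed

lemma arcs_G_subset: "gA G \<subseteq> gV G \<times> gV G"
proof
  fix p assume p: "p \<in> gA G"
  obtain a b where ab: "p = (a, b)" by (cases p)
  have "(a, b) \<in> gA H \<or> (\<exists>w\<in>S. (a, b) \<in> gA (Hs w)) \<or> (\<exists>v. (a, v) \<in> gA H \<and> b \<in> R a)"
    using arc_G_iff p ab by simp
  then show "p \<in> gV G \<times> gV G"
  proof (elim disjE bexE exE conjE)
    assume "(a, b) \<in> gA H" then show ?thesis using arc_H_ends ab top_in_G by blast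
  next
    fix w assume "w \<in> S" "(a, b) \<in> gA (Hs w)"
    then show ?thesis using derived_Tv(2)[of w] ab part_in_G[of w] by blast
  next
    fix v assume "(a, v) \<in> gA H" "b \<in> R a"
    then show ?thesis using arc_H_ends R_subset ab top_in_G part_in_G by blast
  qed
qed

lemma arc_G_top_iff:
  assumes a: "a \<in> S"
  shows "(a, b) \<in> gA G \<longleftrightarrow> Inl b \<in> tc glued (Inl a)"
proof -
  have not_part: "(a, b) \<notin> gA (Hs w)" if "w \<in> S" for w
    using derived_Tv(2)[OF that] disjoint_top[OF that] a by blast
  show ?thesis
  proof (cases "\<exists>v. (a, v) \<in> gA H")
    case False
    then have "(a, b) \<notin> gA G" using arc_G_iff not_part by blast
    then show ?thesis using tc_glued_top[OF a] False by simp
  next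
    case True
    then obtain v where av: "(a, v) \<in> gA H" by blast
    have "tc glued (Inl a) = insert (spine (height a)) (insert (Inl v) (set (tail_branch a)))"
      using tc_glued_top[OF a] True out_neighbour_eq[OF av] by simp
    moreover have "Inl b \<in> set (tail_branch a) \<longleftrightarrow> b \<in> R a"
      using tail_branch_props[OF av] by blast
    ultimately have "Inl b \<in> tc glued (Inl a) \<longleftrightarrow> b = v \<or> b \<in> R a" by simp
    moreover have "(a, b) \<in> gA G \<longleftrightarrow> b = v \<or> b \<in> R a"
    proof
      assume "(a, b) \<in> gA G"
      then have "(a, b) \<in> gA H \<or> (\<exists>v. (a, v) \<in> gA H \<and> b \<in> R a)"
        using arc_G_iff not_part by blast
      then show "b = v \<or> b \<in> R a" using out_unique[OF av] by blast
    qed (use arc_G_iff av in blast)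
    ultimately show ?thesis by simp
  qed
qed

lemma arc_G_Tv_iff:
  assumes w: "w \<in> S" "a \<in> gV (Hs w)"
  shows "(a, b) \<in> gA G \<longleftrightarrow> Inl b \<in> tc glued (Inl a)"
proof -
  have aS: "a \<notin> S" using disjoint_top[OF w(1)] w(2) by blast
  have aT: "Inl a \<in> tV (Tv w)" using derived_Tv(1)[OF w(1)] w by auto
  have "(a, b) \<in> gA G \<longleftrightarrow> (a, b) \<in> gA (Hs w)"
  proof
    assume "(a, b) \<in> gA G"
    then consider "(a, b) \<in> gA H" | w' where "w' \<in> S" "(a, b) \<in> gA (Hs w')"
      | v where "(a, v) \<in> gA H"
      using arc_G_iff by blast
    then show "(a, b) \<in> gA (Hs w)"
    proof cases
      case 2
      then have "w' = w" using derived_Tv(2) disjoint_parts w by blast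
      then show ?thesis using 2 by simp
    qed (use arc_H_ends aS in blast)+
  qed (use arcs_G w in blast)
  also have "\<dots> \<longleftrightarrow> Inl b \<in> tc (Tv w) (Inl a)"
  proof (cases "b \<in> gV (Hs w)")
    case False
    interpret burling_btree "Tv w" using burling_btree_Tv[OF w(1)] .
    have "Inl b \<notin> tc (Tv w) (Inl a)" using tc_subset[OF aT] Inl_in_Tv_imp[OF w(1)] False by blast
    then show ?thesis using derived_Tv(2)[OF w(1)] False by blast
  qed (use derived_Tv(3)[OF w] in simp)
  also have "\<dots> \<longleftrightarrow> Inl b \<in> tc glued (Inl a)" using tc_glued_Tv[OF w(1) aT] by simp
  finally show ?thesis .
qed

lemma derived_glued: "derived glued (map_graph Inl G)"
  unfolding derived_Inl_iff
proof (intro conjI ballI Inl_G_vertices_in_glued arcs_G_subset)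
  fix a b assume "a \<in> gV G"
  then consider "a \<in> S" | w where "w \<in> S" "a \<in> gV (Hs w)" using vertex_G_cases by blast
  then show "(a, b) \<in> gA G \<longleftrightarrow> Inl b \<in> tc glued (Inl a)"
  proof cases
    case 1
    then show ?thesis by (rule arc_G_top_iff)
  next
    case 2
    then show ?thesis by (rule arc_G_Tv_iff)
  qed
qed

definition Tv_vertices where "Tv_vertices = (\<Union>v\<in>S. tV (Tv v))"

lemma in_Tv_vertices_iff: "x \<in> Tv_vertices \<longleftrightarrow> (\<exists>v\<in>S. x \<in> tV (Tv v))"
  unfolding Tv_vertices_def by (rule UN_iff)

lemma G_vertex_not_in_Tv: assumes "y \<in> tV glued" "y \<in> Inl ` gV G" "y \<notin> Tv_vertices"
  shows "y \<in> Inl ` S"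
  using assms(1)
proof (cases rule: glued_vertex_cases)
  case (spine j) then show ?thesis using assms(2) by auto
next
  case (top u) then show ?thesis by simp
next
  case (sub v) then show ?thesis using assms(3) unfolding in_Tv_vertices_iff by blast
qed

lemma successor_of_top_in_Tv:
  assumes b: "is_branch glued xs" and p: "Suc p < length xs" and s: "xs ! p \<in> Inl ` S"
  shows "xs ! Suc p \<in> Tv_vertices"
proof -
  obtain u where u: "u \<in> S" "xs ! p = Inl u" using s by blast
  have sc: "successively (\<lambda>a b. b \<in> children glued a) xs" using b by (simp add: is_branch_def)
  have "(\<lambda>a b. b \<in> children glued a) (xs ! p) (xs ! Suc p)" by (rule successively_nth[OF sc p])
  hence "xs ! Suc p \<in> children glued (Inl u)" using u by simp
  hence e: "xs ! Suc p = subroot u" using children_glued_top[OF u(1)] by simp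
  have "subroot u \<in> Tv_vertices" unfolding in_Tv_vertices_iff
    using u(1) subroot_in[OF u(1)] by blast
  thus ?thesis unfolding e .
qed

lemma card_branch_Tv: assumes v: "v \<in> S" and b: "is_branch (Tv v) ys"
  shows "card (set ys \<inter> Inl ` gV G) \<le> k"
proof -
  have "set ys \<inter> Inl ` gV G \<subseteq> set ys \<inter> Inl ` gV (Hs v)"
  proof
    fix y assume y: "y \<in> set ys \<inter> Inl ` gV G"
    then obtain x where x: "y = Inl x" by blast
    have "y \<in> tV (Tv v)" using y b by (auto simp: is_branch_def)
    hence "x \<in> gV (Hs v)" using Inl_in_Tv_imp[OF v] x by simp
    thus "y \<in> set ys \<inter> Inl ` gV (Hs v)" using x y by blast
  qed
  hence "card (set ys \<inter> Inl ` gV G) \<le> card (set ys \<inter> Inl ` gV (Hs v))" by (intro card_mono) auto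
  also have "\<dots> \<le> k" using derived_Tv(4)[OF v b] .
  finally show ?thesis .
qed

text \<open>Outside the trees \<open>Tv v\<close> a branch meets \<open>G\<close> only in top vertices, and it enters \<open>Tv u\<close> right
  after the top vertex \<open>u\<close>; so it meets \<open>G\<close> at most once before entering some \<open>Tv v\<close>.\<close>

lemma card_G_vertices_above_Tv:
  assumes b: "is_branch glued xs" and i: "i \<le> length xs" "\<forall>p<i. xs ! p \<notin> Tv_vertices"
  shows "card (set (take i xs) \<inter> Inl ` gV G) \<le> 1"
proof -
  have "set (take i xs) \<inter> Inl ` gV G \<subseteq> {xs ! (i - 1)}"
  proof
    fix y assume y: "y \<in> set (take i xs) \<inter> Inl ` gV G"
    then obtain p where p: "p < i" "xs ! p = y"
      using i(1) by (auto simp: in_set_conv_nth min_def split: if_splits)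
    have "p < length xs" using p i(1) by simp
    then have "y \<in> set xs" using nth_mem p(2) by metis
    then have yT: "y \<in> tV glued" using b unfolding is_branch_def by blast
    have yU: "y \<notin> Tv_vertices" using i(2) p by auto
    have "y \<in> Inl ` S" using G_vertex_not_in_Tv[OF yT _ yU] y by blast
    have "\<not> Suc p < i"
    proof
      assume "Suc p < i"
      then have "xs ! Suc p \<in> Tv_vertices"
        using successor_of_top_in_Tv[OF b] \<open>y \<in> Inl ` S\<close> p i(1) by simp
      then show False using i(2) \<open>Suc p < i\<close> by blast
    qed
    then have "p = i - 1" using p(1) by simp
    then show "y \<in> {xs ! (i - 1)}" using p by simp
  qed
  then have "card (set (take i xs) \<inter> Inl ` gV G) \<le> card {xs ! (i - 1)}" by (intro card_mono) auto
  then show ?thesis by simp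
qed

lemma card_branch_glued:
  assumes b: "is_branch glued xs"
  shows "card (set xs \<inter> Inl ` gV G) \<le> Suc k"
proof (cases "\<exists>i<length xs. xs ! i \<in> Tv_vertices")
  case False
  then show ?thesis using card_G_vertices_above_Tv[OF b, of "length xs"] by simp
next
  case True
  define i where "i = (LEAST i. i < length xs \<and> xs ! i \<in> Tv_vertices)"
  have i: "i < length xs" "xs ! i \<in> Tv_vertices"
    using LeastI_ex[of "\<lambda>i. i < length xs \<and> xs ! i \<in> Tv_vertices"] True unfolding i_def by blast+
  have above: "\<forall>p<i. xs ! p \<notin> Tv_vertices"
    using not_less_Least i(1) unfolding i_def by fastforce
  obtain v where v: "v \<in> S" "xs ! i \<in> tV (Tv v)" using i(2) unfolding in_Tv_vertices_iff by blast
  have "drop i xs \<noteq> []" "hd (drop i xs) = xs ! i" using i by (auto simp: hd_drop_conv_nth)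
  then have "is_branch (Tv v) (drop i xs)"
    using branch_glued_imp_branch_Tv[OF v(1) is_branch_drop[OF b]] v by simp
  then have "card (set (drop i xs) \<inter> Inl ` gV G) \<le> k" by (rule card_branch_Tv[OF v(1)])
  moreover have "card (set (take i xs) \<inter> Inl ` gV G) \<le> 1"
    using card_G_vertices_above_Tv[OF b _ above] i(1) by simp
  moreover have
    "set xs \<inter> Inl ` gV G = (set (take i xs) \<inter> Inl ` gV G) \<union> (set (drop i xs) \<inter> Inl ` gV G)"
    by (metis Int_Un_distrib2 append_take_drop_id set_append)
  then have "card (set xs \<inter> Inl ` gV G)
      \<le> card (set (take i xs) \<inter> Inl ` gV G) + card (set (drop i xs) \<inter> Inl ` gV G)"
    by (simp add: card_Un_le)
  ultimately show ?thesis by linarith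
qed

lemma proper_ancestors_glued_top:
  assumes u: "u \<in> S"
  shows "proper_ancestors glued (Inl u) \<subseteq> range spine"
proof
  fix y assume "y \<in> proper_ancestors glued (Inl u)"
  then obtain n where n: "1 \<le> n" "y = (tpar glued ^^ n) (Inl u)"
    by (auto simp: proper_ancestors_def)
  then obtain m where "n = Suc m" by (cases n) auto
  thus "y \<in> range spine" using n tpar_glued_pow_top[OF u] by simp
qed

lemma top_in_proper_ancestors_glued:
  assumes w: "w \<in> S" and x: "x \<in> tV (Tv w)"
  shows "Inl w \<in> proper_ancestors glued x"
proof -
  interpret glued: rooted_btree glued using rooted_glued by (simp add: rooted_btree_def)
  interpret sub: rooted_btree "Tv w" using burling_btree_Tv[OF w] by (simp add: burling_btree_def)
  have "Suc (depth (Tv w) x) \<le> depth glued x"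
  proof (rule ccontr)
    assume "\<not> Suc (depth (Tv w) x) \<le> depth glued x"
    then have le: "depth glued x \<le> depth (Tv w) x" by simp
    have "(tpar glued ^^ depth glued x) x = (tpar (Tv w) ^^ depth glued x) x"
      using tpar_glued_pow_Tv[OF w x le] .
    moreover have "(tpar (Tv w) ^^ depth glued x) x \<in> tV (Tv w)"
      using sub.tpar_pow_in[OF x le] by simp
    ultimately have "spine (Suc (card S)) \<in> tV (Tv w)"
      using glued.tpar_pow_depth Tv_vertex_in_glued[OF w x] by simp
    then show False using Tv_vertex_neq_spine[OF w] by blast
  qed
  then show ?thesis
    using glued.proper_ancestorsI[of "Suc (depth (Tv w) x)" x] tpar_glued_pow_Tv_depth[OF w x]
      by simp
qed

lemma top_set_glued: "top_set glued (map_graph Inl G) = Inl ` S"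
proof -
  interpret rooted_btree glued using rooted_glued by (simp add: rooted_btree_def)
  have "{v \<in> gV G. proper_ancestors glued (Inl v) \<inter> Inl ` gV G = {}} = S"
  proof (intro equalityI subsetI)
    fix v assume v: "v \<in> {v \<in> gV G. proper_ancestors glued (Inl v) \<inter> Inl ` gV G = {}}"
    show "v \<in> S"
    proof (rule ccontr)
      assume "v \<notin> S"
      then obtain w where w: "w \<in> S" "v \<in> gV (Hs w)" using vertex_G_cases v by blast
      then have "Inl v \<in> tV (Tv w)" using derived_Tv(1)[OF w(1)] by blast
      then have "Inl w \<in> proper_ancestors glued (Inl v)"
        by (rule top_in_proper_ancestors_glued[OF w(1)])
      then show False using v top_in_G[OF w(1)] by blast
    qed
  next
    fix v assume v: "v \<in> S"
    then show "v \<in> {v \<in> gV G. proper_ancestors glued (Inl v) \<inter> Inl ` gV G = {}}"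
      using proper_ancestors_glued_top[OF v] top_in_G[OF v] by auto
  qed
  moreover have "gV (map_graph Inl G) \<subseteq> tV glued"
    using Inl_G_vertices_in_glued by (simp add: map_graph_def)
  ultimately show ?thesis using top_set_eq[of "map_graph Inl G"] by (auto simp: map_graph_def)
qed

lemma root_branch_glued: assumes X: "X \<in> {{}} \<union> {insert v X | v X. v \<in> S \<and> X \<in> Rs v}"
  shows "\<exists>xs. root_branch glued xs \<and> set xs \<inter> range Inl = Inl ` X"
proof (cases "X = {}")
  case True then show ?thesis by (intro exI[of _ "[]"]) (simp add: root_branch_def is_branch_def)
next
  case False
  then obtain v X' where v: "X = insert v X'" "v \<in> S" "X' \<in> Rs v" using X by blast
  interpret rooted_btree glued using rooted_glued by (simp add: rooted_btree_def)
  obtain ys where ys: "is_branch (Tv v) ys" "ys = [] \<or> hd ys = subroot v"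
      "set ys \<inter> range Inl = Inl ` X'"
    using branches_Tv[OF v(2,3)] by (auto simp: root_branch_def subroot_def)
  have vV: "Inl v \<in> tV glued" using v by simp
  define xs where "xs = root_path glued (Inl v) @ ys"
  have an: "root_path glued (Inl v) \<noteq> []"
    using length_root_path[of "Inl v"] by (metis length_0_conv nat.distinct(1))
  have yT: "is_branch glued ys" using branch_Tv_imp_branch_glued[OF v(2) ys(1)] .
  have "is_branch glued xs"
    using root_path_branch[OF vV] yT ys(2) children_glued_top[OF v(2)] an
      unfolding xs_def is_branch_def
    by (auto simp: successively_append_iff last_root_path)
  moreover have "hd xs = troot glued" using an hd_root_path[OF vV] xs_def by simp
  moreover have "set xs \<inter> range Inl = Inl ` X"
  proof -
    have "set (root_path glued (Inl v)) \<inter> range Inl = {Inl v}"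
      using set_root_path_eq[of "Inl v"] proper_ancestors_glued_top[OF v(2)] by auto
    thus ?thesis using ys(3) v(1) xs_def by auto
  qed
  ultimately show ?thesis by (auto simp: root_branch_def)
qed

lemma glued_model:
  "burling_model (Suc k) lab G ({{}} \<union> {insert v X | v X. v \<in> S \<and> X \<in> Rs v}) glued
    \<and> top_set glued (map_graph Inl G) = Inl ` S"
  unfolding burling_model_def
proof (intro conjI ballI)
  show "burling_tree glued" by (rule burling_glued)
  show "k_burling_derived (Suc k) glued (map_graph Inl G)"
    unfolding k_burling_derived_def
      using derived_glued card_branch_glued by (simp add: map_graph_def)
  show "top_set glued (map_graph Inl G) = Inl ` S" by (rule top_set_glued)
  show "tV glued \<subseteq> Inl ` gV G \<union> Inr ` range lab"
  proof
    fix x assume "x \<in> tV glued"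
    thus "x \<in> Inl ` gV G \<union> Inr ` range lab"
    proof (cases rule: glued_vertex_cases)
      case (spine j) then show ?thesis by (simp add: spine_def)
    next
      case (top u) then show ?thesis using top_in_G by simp
    next
      case (sub v)
      have "x \<in> Inl ` gV (Hs v) \<union> Inr ` range (\<lambda>m. lab (prod_encode (Suc (idx v), m)))"
        using vertices_Tv sub by blast
      thus ?thesis using part_in_G[OF sub(1)] by auto
    qed
  qed
next
  fix X assume "X \<in> {{}} \<union> {insert v X | v X. v \<in> S \<and> X \<in> Rs v}"
  thus "\<exists>xs. root_branch glued xs \<and> set xs \<inter> range Inl = Inl ` X"
    by (rule root_branch_glued)
qed

end

theorem k_burling_of_sequential:
  fixes G :: "'a ograph" and lab :: "nat \<Rightarrow> nat"
  assumes "kseq_base k G Ss H" "inj lab"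
  shows "\<exists>T. burling_model k lab G Ss T \<and> top_set T (map_graph Inl G) = Inl ` gV H"
  using assms
proof (induction k arbitrary: G Ss H lab)
  case 0
  define T :: "('a + nat) btree" where
    "T = \<lparr>tV = {Inr (lab 0)}, troot = Inr (lab 0), tpar = (\<lambda>_. Inr (lab 0)),
          tlast = (\<lambda>_. Inr (lab 0)), tc = (\<lambda>_. {})\<rparr>"
  have "children T x = {}" for x by (simp add: children_def T_def)
  then have "burling_tree T"
    by (auto simp: burling_tree_def rooted_tree_def T_def is_leaf_def intro: exI[of _ 0])
  moreover have "G = empty_graph" "Ss = {{}}" using 0 by simp_all
  ultimately have "burling_model 0 lab G Ss T"
    unfolding burling_model_def k_burling_derived_def derived_Inl_iff
    by (auto simp: empty_graph_def map_graph_def T_def root_branch_def is_branch_def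
        intro: exI[of _ "[]"])
  moreover have "top_set T (map_graph Inl G) = Inl ` gV H"
    using 0 by (simp add: top_set_def map_graph_def empty_graph_def)
  ultimately show ?case by blast
next
  case (Suc k)
  from Suc.prems(1) obtain Hs Rs R where
    forest: "in_forest H" and
    seq: "\<forall>v\<in>gV H. \<exists>H'. kseq_base k (Hs v) (Rs v) H'" and
    disjoint_top: "\<forall>v\<in>gV H. gV (Hs v) \<inter> gV H = {}" and
    disjoint_parts: "\<forall>v\<in>gV H. \<forall>w\<in>gV H. v \<noteq> w \<longrightarrow> gV (Hs v) \<inter> gV (Hs w) = {}" and
    R_in_Rs: "\<forall>u v. (u, v) \<in> gA H \<longrightarrow> R u \<in> Rs v" and
    vertices_G: "gV G = gV H \<union> (\<Union>v\<in>gV H. gV (Hs v))" and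
    arcs_G: "gA G = gA H \<union> (\<Union>v\<in>gV H. gA (Hs v)) \<union> {(u, x). \<exists>v. (u, v) \<in> gA H \<and> x \<in> R u}" and
    Ss: "Ss = {{}} \<union> {insert v X | v X. v \<in> gV H \<and> X \<in> Rs v}"
    by auto
  have "finite (gV H)" using forest by (simp add: in_forest_def oriented_graph_def)
  then obtain idx :: "'a \<Rightarrow> nat" where idx: "inj_on idx (gV H)"
    using finite_imp_inj_to_nat_seg by blast
  have "inj (\<lambda>m. lab (prod_encode (Suc (idx v), m)))" for v
  proof (rule injI)
    fix m m' assume "lab (prod_encode (Suc (idx v), m)) = lab (prod_encode (Suc (idx v), m'))"
    then have "prod_encode (Suc (idx v), m) = prod_encode (Suc (idx v), m')"
      by (rule injD[OF Suc.prems(2)])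
    then show "m = m'" by (simp add: prod_encode_eq)
  qed
  then have "\<forall>v\<in>gV H. \<exists>T. burling_model k (\<lambda>m. lab (prod_encode (Suc (idx v), m))) (Hs v) (Rs v) T"
    using Suc.IH seq by blast
  then obtain Tv where Tv: "\<And>v. v \<in> gV H \<Longrightarrow>
      burling_model k (\<lambda>m. lab (prod_encode (Suc (idx v), m))) (Hs v) (Rs v) (Tv v)"
    by metis
  interpret burling_gluing G H Hs Rs R k lab idx Tv
    by unfold_locales (use forest Suc.prems(2) idx disjoint_top disjoint_parts R_in_Rs vertices_G
        arcs_G Tv in blast)+
  show ?case using glued_model Ss by blast
qed

text \<open>The equivalence holds for every graph \<open>G\<close> and set \<open>S\<close>.\<close>

theorem lemma4p4:
  fixes k :: nat and G :: "'a ograph" and S :: "'a set"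
  assumes "oriented_graph G" and "S \<subseteq> gV G"
  shows "(\<exists>T :: ('a + nat) btree. burling_tree T
            \<and> k_burling_derived k T (map_graph Inl G)
            \<and> top_set T (map_graph Inl G) = Inl ` S)
         \<longleftrightarrow> (\<exists>Ss. kseq_base k G Ss (induced G S))"
proof
  assume "\<exists>T :: ('a + nat) btree. burling_tree T \<and> k_burling_derived k T (map_graph Inl G)
            \<and> top_set T (map_graph Inl G) = Inl ` S"
  then obtain T :: "('a + nat) btree"
    where T: "burling_tree T" "k_burling_derived k T (map_graph Inl G)"
    and top: "top_set T (map_graph Inl G) = Inl ` S"
    by blast
  interpret burling_derivation T G using burling_derivationI[OF T] .
  have "top_vertices = S" using top top_set_eq_top_vertices by (simp add: inj_image_eq_iff)
  then show "\<exists>Ss. kseq_base k G Ss (induced G S)" using sequential_of_k_burling[OF T] by auto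
next
  assume "\<exists>Ss. kseq_base k G Ss (induced G S)"
  then obtain Ss where "kseq_base k G Ss (induced G S)" ..
  from k_burling_of_sequential[OF this inj_on_id]
  show "\<exists>T :: ('a + nat) btree. burling_tree T \<and> k_burling_derived k T (map_graph Inl G)
      \<and> top_set T (map_graph Inl G) = Inl ` S"
    by (auto simp: burling_model_def induced_def)
qed

end
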